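(* Let $A\subseteq\mathcal{R}$ be S-measurable. Then $A$ can be written as a disjoint union $A=\left(\bigcup_{n=1}^\infty K_n\right)\cup S$, where each $K_n$ is an interval in $\mathcal{R}$, the $K_n$ are pairwise disjoint, $\sum_{n=1}^\infty l(K_n)$ converges in $\mathcal{R}$ with $\sum_{n=1}^\infty l(K_n)=M_s(A)$, and $S$ is S-measurable with $M_s(S)=0$.
   Context: The Levi-Civita field $\mathcal{R}$ is the set of functions $x:\mathbb{Q}\to\mathbb{R}$ with left-finite support (for every $q\in\mathbb{Q}$ only finitely many points of the support are smaller than $q$), with componentwise addition and formal power series (Cauchy product) multiplication. It is an ordered field extending $\mathbb{R}$, where $x>0$ iff $x\neq 0$ and $x[\min\operatorname{supp}(x)]>0$. Limits and infinite sums in $\mathcal{R}$ are taken in the order topology, in which $\mathcal{R}$ is Cauchy complete; a series $\sum a_n$ converges iff $a_n\to 0$. An interval is a set of the form $[a,b],[a,b),(a,b]$ or $(a,b)$ with $a<b$ in $\mathcal{R}$; its length is $l=b-a$. A set $A\subseteq\mathcal{R}$ is S-measurable if for every $\epsilon>0$ in $\mathcal{R}$ there are sequences of pairwise disjoint intervals $(I_n)$ and $(J_n)$ with $\bigcup_n I_n\subseteq A\subseteq\bigcup_n J_n$, both $\sum_n l(I_n)$ and $\sum_n l(J_n)$ convergent in $\mathcal{R}$, and $\sum_n l(J_n)-\sum_n l(I_n)\le\epsilon$. For such $A$, the S-measure $M_s(A)$ is the common value of $\lim_{k\to\infty}\sum_n l(I^k_n)=\lim_{k\to\infty}\sum_n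 l(J^k_n)$ for any such inner/outer sequences with gap at most $d^k$, where $d\in\mathcal{R}$ is given by $d[1]=1$ and $d[t]=0$ for $t\neq 1$; equivalently $M_s(A)$ is both the supremum of $\sum l(I_n)$ over inner disjoint interval families and the infimum of $\sum l(J_n)$ over outer ones. *)

theory Defs
  imports Complex_Main
begin

typedef lc = "{x :: rat \<Rightarrow> real. \<forall>q. finite {t. x t \<noteq> 0 \<and> t < q}}"
  morphisms coeff Abs_lc
  by (intro exI[of _ "\<lambda>_. 0"]) auto

setup_lifting type_definition_lc

lemma lc_left_finite_add:
  assumes "\<forall>q. finite {t. (x::rat\<Rightarrow>real) t \<noteq> 0 \<and> t < q}"
      and "\<forall>q. finite {t. (y::rat\<Rightarrow>real) t \<noteq> 0 \<and> t < q}"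
  shows "\<forall>q. finite {t. x t + y t \<noteq> 0 \<and> t < q}"
proof
  fix q
  have "{t. x t + y t \<noteq> 0 \<and> t < q} \<subseteq> {t. x t \<noteq> 0 \<and> t < q} \<union> {t. y t \<noteq> 0 \<and> t < q}"
    by auto
  then show "finite {t. x t + y t \<noteq> 0 \<and> t < q}"
    using assms finite_subset by blast
qed

instantiation lc :: "{zero, plus, uminus, minus}"
begin
lift_definition zero_lc :: lc is "\<lambda>_. 0" by auto
lift_definition plus_lc :: "lc \<Rightarrow> lc \<Rightarrow> lc" is "\<lambda>x y t. x t + y t"
  using lc_left_finite_add by blast
lift_definition uminus_lc :: "lc \<Rightarrow> lc" is "\<lambda>x t. - x t" by simp
lift_definition minus_lc :: "lc \<Rightarrow> lc \<Rightarrow> lc" is "\<lambda>x y t. x t - y t"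
proof -
  fix x y :: "rat \<Rightarrow> real" and q :: rat
  assume "\<And>q. finite {t. x t \<noteq> 0 \<and> t < q}" "\<And>q. finite {t. y t \<noteq> 0 \<and> t < q}"
  then have "\<forall>q. finite {t. x t + - y t \<noteq> 0 \<and> t < q}"
    by (intro lc_left_finite_add) simp_all
  then show "finite {t. x t - y t \<noteq> 0 \<and> t < q}" by simp
qed
instance ..
end

definition lc_pos :: "lc \<Rightarrow> bool" where
  "lc_pos x \<longleftrightarrow> (\<exists>t. coeff x t > 0 \<and> (\<forall>s<t. coeff x s = 0))"

instantiation lc :: ord
begin
definition less_lc :: "lc \<Rightarrow> lc \<Rightarrow> bool" where
  "less_lc x y \<longleftrightarrow> lc_pos (y - x)"
definition less_eq_lc :: "lc \<Rightarrow> lc \<Rightarrow> bool" where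
  "less_eq_lc x y \<longleftrightarrow> lc_pos (y - x) \<or> x = y"
instance ..
end

definition lc_abs :: "lc \<Rightarrow> lc" where
  "lc_abs x = (if 0 \<le> x then x else - x)"

definition lc_tendsto :: "(nat \<Rightarrow> lc) \<Rightarrow> lc \<Rightarrow> bool" where
  "lc_tendsto a L \<longleftrightarrow> (\<forall>\<epsilon>>0. \<exists>N. \<forall>n\<ge>N. lc_abs (a n - L) < \<epsilon>)"

primrec lc_psum :: "(nat \<Rightarrow> lc) \<Rightarrow> nat \<Rightarrow> lc" where
  "lc_psum a 0 = 0"
| "lc_psum a (Suc n) = lc_psum a n + a n"

definition lc_sums :: "(nat \<Rightarrow> lc) \<Rightarrow> lc \<Rightarrow> bool" where
  "lc_sums a s \<longleftrightarrow> lc_tendsto (lc_psum a) s"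

definition lc_interval :: "lc set \<Rightarrow> bool" where
  "lc_interval I \<longleftrightarrow> (\<exists>a b. a < b \<and>
      (I = {x. a \<le> x \<and> x \<le> b} \<or> I = {x. a \<le> x \<and> x < b} \<or>
       I = {x. a < x \<and> x \<le> b} \<or> I = {x. a < x \<and> x < b}))"

definition lc_len :: "lc set \<Rightarrow> lc" where
  "lc_len I = (if I = {} then 0 else
     (THE l. \<exists>a b. a < b \<and> l = b - a \<and>
      (I = {x. a \<le> x \<and> x \<le> b} \<or> I = {x. a \<le> x \<and> x < b} \<or>
       I = {x. a < x \<and> x \<le> b} \<or> I = {x. a < x \<and> x < b})))"

text \<open>A (countable) family of pairwise disjoint intervals, indexed by nat; members are
  allowed to be empty so that finite families (including the empty family) are covered.\<close>
definition lc_ivl_family :: "(nat \<Rightarrow> lc set) \<Rightarrow> bool" where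
  "lc_ivl_family I \<longleftrightarrow> (\<forall>n. I n = {} \<or> lc_interval (I n)) \<and>
      (\<forall>m n. m \<noteq> n \<longrightarrow> I m \<inter> I n = {})"

definition inner_sums :: "lc set \<Rightarrow> lc set" where
  "inner_sums A = {s. \<exists>I. lc_ivl_family I \<and> (\<Union>n. I n) \<subseteq> A \<and> lc_sums (\<lambda>n. lc_len (I n)) s}"

definition outer_sums :: "lc set \<Rightarrow> lc set" where
  "outer_sums A = {s. \<exists>J. lc_ivl_family J \<and> A \<subseteq> (\<Union>n. J n) \<and> lc_sums (\<lambda>n. lc_len (J n)) s}"

definition S_measurable :: "lc set \<Rightarrow> bool" where
  "S_measurable A \<longleftrightarrow> (\<forall>\<epsilon>>0. \<exists>sI\<in>inner_sums A. \<exists>sJ\<in>outer_sums A. sJ - sI \<le> \<epsilon>)"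

definition lc_is_sup :: "lc set \<Rightarrow> lc \<Rightarrow> bool" where
  "lc_is_sup X m \<longleftrightarrow> (\<forall>x\<in>X. x \<le> m) \<and> (\<forall>u. (\<forall>x\<in>X. x \<le> u) \<longrightarrow> m \<le> u)"

definition lc_is_inf :: "lc set \<Rightarrow> lc \<Rightarrow> bool" where
  "lc_is_inf X m \<longleftrightarrow> (\<forall>x\<in>X. m \<le> x) \<and> (\<forall>u. (\<forall>x\<in>X. u \<le> x) \<longrightarrow> u \<le> m)"

definition S_measure :: "lc set \<Rightarrow> lc" where
  "S_measure A = (THE m. lc_is_sup (inner_sums A) m \<and> lc_is_inf (outer_sums A) m)"

end

(*
  The intervals are chosen greedily: at stage k the intervals chosen so far are cut out of an
  inner family whose total length is within d^k of M_s(A), and a sufficiently long finite initial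
  segment of the result is appended.  The lengths of all chosen intervals then sum to M_s(A).
  Cutting finitely many chosen intervals out of an outer family of A shows that the remainder S
  has outer sums below every positive epsilon, so S is S-measurable of measure 0.

  Everything rests on inner sums never exceeding outer sums, i.e. on countably many intervals
  covering (a, b) having total length at least b - a.  Heine-Borel fails in the Levi-Civita
  field, so this is shown directly: if the total length fell short of b - a by about p d^e, then
  after removing the finitely many intervals that are not infinitely small compared with d^e a
  gap of length c d^e would remain.  It contains the uncountably many points u + r d^e with
  0 < r < c, but each remaining interval is shorter than d^(e+1) and so contains at most one.
*)

theory Submission
  imports Defs "HOL-Analysis.Continuum_Not_Denumerable"
begin

section \<open>The ordered group of the Levi-Civita field\<close>

lemma lc_left_finite: "finite {t. coeff x t \<noteq> 0 \<and> t < q}"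
  using coeff[of x] by auto

lemma coeff_add [simp]: "coeff (x + y) t = coeff x t + coeff y t" by transfer simp
lemma coeff_diff [simp]: "coeff (x - y) t = coeff x t - coeff y t" by transfer simp
lemma coeff_uminus [simp]: "coeff (- x) t = - coeff x t" by transfer simp
lemma coeff_zero [simp]: "coeff 0 t = 0" by transfer simp

lemma lc_eqI: "(\<And>t. coeff x t = coeff y t) \<Longrightarrow> x = y"
  by (simp add: coeff_inject[symmetric] fun_eq_iff)

instance lc :: ab_group_add
  by standard (transfer; force simp: algebra_simps)+

lemma lc_leading_exponent_exists:
  assumes "x \<noteq> 0"
  shows "\<exists>t. coeff x t \<noteq> 0 \<and> (\<forall>s<t. coeff x s = 0)"
proof -
  obtain t0 where t0: "coeff x t0 \<noteq> 0"
    using assms lc_eqI[of x 0] by auto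
  define F where "F = {t. coeff x t \<noteq> 0 \<and> t < t0 + 1}"
  have fin: "finite F" and t0F: "t0 \<in> F"
    using lc_left_finite t0 unfolding F_def by auto
  have "Min F \<in> F" using fin t0F by (intro Min_in) auto
  moreover have "coeff x s = 0" if "s < Min F" for s
  proof (rule ccontr)
    assume "coeff x s \<noteq> 0"
    moreover have "s < t0 + 1" using that Min_le[OF fin t0F] by simp
    ultimately have "s \<in> F" unfolding F_def by simp
    then show False using that Min_le[OF fin] by fastforce
  qed
  ultimately show ?thesis unfolding F_def by blast
qed

lemma lc_pos_add: assumes "lc_pos x" "lc_pos y" shows "lc_pos (x + y)"
proof -
  obtain tx where tx: "coeff x tx > 0" "\<forall>s<tx. coeff x s = 0"
    using assms(1) unfolding lc_pos_def by blast
  obtain ty where ty: "coeff y ty > 0" "\<forall>s<ty. coeff y s = 0"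
    using assms(2) unfolding lc_pos_def by blast
  show ?thesis unfolding lc_pos_def
    using tx ty
    by (intro exI[of _ "min tx ty"]) (cases tx ty rule: linorder_cases; auto simp: min_def)
qed

lemma not_lc_pos_zero [simp]: "\<not> lc_pos 0" unfolding lc_pos_def by simp

lemma lc_pos_uminus: assumes "lc_pos x" shows "\<not> lc_pos (- x)"
proof
  assume "lc_pos (- x)"
  then obtain ty where ty: "coeff x ty < 0" "\<forall>s<ty. coeff x s = 0"
    unfolding lc_pos_def by auto
  obtain tx where tx: "coeff x tx > 0" "\<forall>s<tx. coeff x s = 0"
    using assms unfolding lc_pos_def by blast
  show False using tx ty by (cases tx ty rule: linorder_cases) force+
qed

lemma lc_pos_or_pos_uminus: "x \<noteq> 0 \<Longrightarrow> lc_pos x \<or> lc_pos (- x)"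
  using lc_leading_exponent_exists[of x] unfolding lc_pos_def
  by (metis coeff_uminus linorder_neqE_linordered_idom neg_0_less_iff_less neg_equal_0_iff_equal)

instance lc :: linordered_ab_group_add
proof
  fix x y z :: lc
  show "(x < y) = (x \<le> y \<and> \<not> y \<le> x)" unfolding less_lc_def less_eq_lc_def
    by (metis lc_pos_uminus not_lc_pos_zero minus_diff_eq right_minus_eq)
  show "x \<le> x" unfolding less_eq_lc_def by simp
  show "x \<le> y \<Longrightarrow> y \<le> z \<Longrightarrow> x \<le> z" unfolding less_eq_lc_def
    by (metis diff_add_cancel add_diff_eq lc_pos_add)
  show "x \<le> y \<Longrightarrow> y \<le> x \<Longrightarrow> x = y" unfolding less_eq_lc_def
    by (metis lc_pos_uminus minus_diff_eq)
  show "x \<le> y \<or> y \<le> x" unfolding less_eq_lc_def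
    by (metis lc_pos_or_pos_uminus minus_diff_eq right_minus_eq)
  show "x \<le> y \<Longrightarrow> z + x \<le> z + y" unfolding less_eq_lc_def by simp
qed

lemma lc_zero_less_iff: "0 < x \<longleftrightarrow> lc_pos x"
  unfolding less_lc_def by simp

lemma lc_zero_lessI: "coeff x t > 0 \<Longrightarrow> (\<forall>s<t. coeff x s = 0) \<Longrightarrow> 0 < x"
  unfolding lc_zero_less_iff lc_pos_def by blast

instantiation lc :: ordered_ab_group_add_abs
begin
definition abs_lc :: "lc \<Rightarrow> lc" where "abs_lc = lc_abs"
instance
proof
  fix a b :: lc
  show "0 \<le> \<bar>a\<bar>" "a \<le> \<bar>a\<bar>" "\<bar>- a\<bar> = \<bar>a\<bar>"
    by (auto simp: abs_lc_def lc_abs_def)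
  show "a \<le> b \<Longrightarrow> - a \<le> b \<Longrightarrow> \<bar>a\<bar> \<le> b"
    by (simp add: abs_lc_def lc_abs_def)
  have ge: "x \<le> \<bar>x\<bar>" "- x \<le> \<bar>x\<bar>" for x :: lc
    by (auto simp: abs_lc_def lc_abs_def not_le less_imp_le)
  have "a + b \<le> \<bar>a\<bar> + \<bar>b\<bar>" using add_mono[OF ge(1) ge(1)] .
  moreover have "- (a + b) \<le> \<bar>a\<bar> + \<bar>b\<bar>" using add_mono[OF ge(2) ge(2)] by simp
  ultimately show "\<bar>a + b\<bar> \<le> \<bar>a\<bar> + \<bar>b\<bar>"
    by (simp add: abs_lc_def lc_abs_def)
qed
end

lemma lc_abs_eq_abs [simp]: "lc_abs x = \<bar>x\<bar>"
  by (simp add: abs_lc_def)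

lemma abs_less_iff_linordered:
  fixes x e :: "'a :: {linordered_ab_group_add, ordered_ab_group_add_abs}"
  shows "\<bar>x\<bar> < e \<longleftrightarrow> x < e \<and> - x < e"
  by (metis abs_ge_minus_self abs_ge_self abs_minus_cancel abs_of_nonneg abs_of_nonpos
      le_less_trans linorder_le_cases)

lemma abs_add_less:
  fixes x y :: "'a :: ordered_ab_group_add_abs"
  shows "\<bar>x\<bar> < e1 \<Longrightarrow> \<bar>y\<bar> < e2 \<Longrightarrow> \<bar>x + y\<bar> < e1 + e2"
  by (rule order.strict_trans1[OF abs_triangle_ineq add_strict_mono])


section \<open>Monomials and leading terms\<close>

text \<open>\<open>lc_monom c e\<close> is the element \<open>c d\<^sup>e\<close>.\<close>

lift_definition lc_monom :: "real \<Rightarrow> rat \<Rightarrow> lc" is "\<lambda>c e t. if t = e then c else 0"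
proof -
  fix c :: real and e q :: rat
  have "{t. (if t = e then c else 0) \<noteq> 0 \<and> t < q} \<subseteq> {e}" by auto
  then show "finite {t. (if t = e then c else 0) \<noteq> 0 \<and> t < q}" using finite_subset by blast
qed

lemma coeff_lc_monom [simp]: "coeff (lc_monom c e) t = (if t = e then c else 0)"
  by transfer simp

lemma lc_monom_add: "lc_monom c e + lc_monom c' e = lc_monom (c + c') e"
  by (rule lc_eqI) simp

lemma lc_monom_diff: "lc_monom c e - lc_monom c' e = lc_monom (c - c') e"
  by (rule lc_eqI) simp

definition lc_vanishes_below :: "rat \<Rightarrow> lc \<Rightarrow> bool" where
  "lc_vanishes_below k y \<longleftrightarrow> (\<forall>s<k. coeff y s = 0)"

lemma lc_pos_imp_leading:
  "0 < x \<Longrightarrow> \<exists>e. coeff x e > 0 \<and> lc_vanishes_below e x"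
  unfolding lc_zero_less_iff lc_pos_def lc_vanishes_below_def by blast

lemma lc_monom_pos: "c > 0 \<Longrightarrow> 0 < lc_monom c e"
  by (rule lc_zero_lessI[of _ e]) auto

lemma lc_monom_strict_mono: "c < c' \<Longrightarrow> lc_monom c e < lc_monom c' e"
  using lc_monom_pos[of "c' - c" e] by (simp add: lc_monom_diff[symmetric])

lemma lc_monom_less_exponent: "c > 0 \<Longrightarrow> e < e' \<Longrightarrow> lc_monom c' e' < lc_monom c e"
  by (subst diff_gt_0_iff_gt[symmetric], rule lc_zero_lessI[of _ e]) auto

lemma lc_monom_less_leading:
  "0 < c \<Longrightarrow> c < coeff x e \<Longrightarrow> lc_vanishes_below e x \<Longrightarrow> lc_monom c e < x"
  by (subst diff_gt_0_iff_gt[symmetric], rule lc_zero_lessI[of _ e])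
    (auto simp: lc_vanishes_below_def)

lemma lc_less_if_vanishes_below:
  assumes "coeff \<epsilon> e > 0" "lc_vanishes_below e \<epsilon>" "e < k" "lc_vanishes_below k y"
  shows "y < \<epsilon>"
  using assms by (subst diff_gt_0_iff_gt[symmetric], intro lc_zero_lessI[of _ e])
    (auto simp: lc_vanishes_below_def)

lemma lc_abs_less_if_vanishes_below:
  assumes "coeff \<epsilon> e > 0" "lc_vanishes_below e \<epsilon>" "e < k" "lc_vanishes_below k y"
  shows "\<bar>y\<bar> < \<epsilon>"
  using lc_less_if_vanishes_below[OF assms] lc_less_if_vanishes_below[OF assms(1-3), of "- y"]
    assms(4)
  by (simp add: abs_less_iff_linordered lc_vanishes_below_def)

lemma lc_vanishes_below_if_abs_less:
  assumes "\<bar>y\<bar> < lc_monom 1 k"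
  shows "lc_vanishes_below k y"
proof (rule ccontr)
  assume "\<not> lc_vanishes_below k y"
  then obtain s where s: "s < k" "coeff y s \<noteq> 0" unfolding lc_vanishes_below_def by auto
  then obtain t where t: "coeff y t \<noteq> 0" "\<forall>s<t. coeff y s = 0"
    using lc_leading_exponent_exists[of y] by (metis coeff_zero)
  have tk: "t < k" using t s by (meson not_le le_less_trans)
  have "y < lc_monom 1 k" "- y < lc_monom 1 k"
    using assms abs_less_iff_linordered by auto
  moreover have "0 < y - lc_monom 1 k \<or> 0 < - y - lc_monom 1 k"
  proof (cases "coeff y t > 0")
    case True
    then show ?thesis using tk t by (intro disjI1 lc_zero_lessI[of _ t]) auto
  next
    case False
    then show ?thesis using tk t by (intro disjI2 lc_zero_lessI[of _ t]) auto
  qed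
  ultimately show False by auto
qed

lemma ceiling_less_of_nat_Suc: "(t::rat) < of_nat (nat \<lceil>t\<rceil> + 1)"
  by linarith

lemma lc_monom_eventually_less:
  assumes "0 < \<epsilon>" shows "\<exists>k::nat. \<forall>j\<ge>k. lc_monom 1 (of_nat j) < \<epsilon>"
proof -
  obtain e where e: "coeff \<epsilon> e > 0" "lc_vanishes_below e \<epsilon>"
    using lc_pos_imp_leading[OF assms] by blast
  have "lc_monom 1 (of_nat j) < \<epsilon>" if "nat \<lceil>e\<rceil> + 1 \<le> j" for j
  proof (rule lc_less_if_vanishes_below[OF e])
    show "e < of_nat j"
      using ceiling_less_of_nat_Suc[of e] that by (meson less_le_trans of_nat_le_iff)
    show "lc_vanishes_below (of_nat j) (lc_monom 1 (of_nat j))"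
      by (simp add: lc_vanishes_below_def)
  qed
  then show ?thesis by blast
qed

lift_definition lc_half :: "lc \<Rightarrow> lc" is "\<lambda>x t. x t / 2"
  by simp

lemma coeff_lc_half [simp]: "coeff (lc_half x) t = coeff x t / 2"
  by transfer simp

lemma lc_half_add_self [simp]: "lc_half x + lc_half x = x"
  by (rule lc_eqI) simp

lemma lc_half_pos: "0 < x \<Longrightarrow> 0 < lc_half x"
  unfolding lc_zero_less_iff lc_pos_def by auto

lemma lc_half_less: "0 < x \<Longrightarrow> lc_half x < x"
  using lc_half_pos[of x] lc_half_add_self[of x] by (metis add_less_cancel_left add.right_neutral)

instance lc :: dense_linorder
proof
  fix a b :: lc
  assume "a < b"
  then have "0 < lc_half (b - a)" "lc_half (b - a) < b - a"
    using lc_half_pos lc_half_less by simp_all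
  then show "\<exists>z. a < z \<and> z < b"
    by (intro exI[of _ "a + lc_half (b - a)"]) (simp add: less_diff_eq add.commute)
qed

section \<open>Limits and series\<close>

lemma lc_tendsto_const: "lc_tendsto (\<lambda>n. c) c"
  unfolding lc_tendsto_def by simp

lemma lc_tendsto_add:
  assumes "lc_tendsto a A" "lc_tendsto b B"
  shows "lc_tendsto (\<lambda>n. a n + b n) (A + B)"
  unfolding lc_tendsto_def
proof (intro allI impI)
  fix \<epsilon> :: lc
  assume "0 < \<epsilon>"
  then obtain N1 N2 where "\<forall>n\<ge>N1. \<bar>a n - A\<bar> < lc_half \<epsilon>" "\<forall>n\<ge>N2. \<bar>b n - B\<bar> < lc_half \<epsilon>"
    using assms lc_half_pos unfolding lc_tendsto_def by (metis lc_abs_eq_abs)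
  then have "\<bar>(a n - A) + (b n - B)\<bar> < lc_half \<epsilon> + lc_half \<epsilon>" if "max N1 N2 \<le> n" for n
    using that by (intro abs_add_less) auto
  then show "\<exists>N. \<forall>n\<ge>N. lc_abs (a n + b n - (A + B)) < \<epsilon>"
    by (intro exI[of _ "max N1 N2"]) (simp add: algebra_simps)
qed

lemma lc_tendsto_diff:
  assumes "lc_tendsto a A" "lc_tendsto b B"
  shows "lc_tendsto (\<lambda>n. a n - b n) (A - B)"
proof -
  have "lc_tendsto (\<lambda>n. - b n) (- B)"
    using assms(2) unfolding lc_tendsto_def by (simp add: abs_minus_commute add.commute)
  from lc_tendsto_add[OF assms(1) this] show ?thesis by simp
qed

lemma lc_tendsto_le:
  assumes "lc_tendsto a A" "lc_tendsto b B" "\<forall>n\<ge>N0. a n \<le> b n"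
  shows "A \<le> B"
proof (rule ccontr)
  assume "\<not> A \<le> B"
  then have d: "0 < A - B" by simp
  let ?h = "lc_half (A - B)"
  obtain N1 N2 where N: "\<forall>n\<ge>N1. \<bar>a n - A\<bar> < ?h" "\<forall>n\<ge>N2. \<bar>b n - B\<bar> < ?h"
    using assms(1,2) lc_half_pos[OF d] unfolding lc_tendsto_def by (metis lc_abs_eq_abs)
  let ?n = "max N0 (max N1 N2)"
  have "A - a ?n < ?h" "b ?n - B < ?h" "a ?n \<le> b ?n"
    using N assms(3) unfolding abs_less_iff_linordered by auto
  then have "A - a ?n + (b ?n - B) < A - B"
    using add_strict_mono lc_half_add_self by metis
  moreover have "A - B \<le> A - a ?n + (b ?n - B)"
    using \<open>a ?n \<le> b ?n\<close> by (simp add: algebra_simps)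
  ultimately show False by simp
qed

lemma lc_tendsto_squeeze:
  assumes "lc_tendsto a L" "lc_tendsto b L" "\<forall>n\<ge>N0. a n \<le> x n \<and> x n \<le> b n"
  shows "lc_tendsto x L"
  unfolding lc_tendsto_def
proof (intro allI impI)
  fix \<epsilon> :: lc
  assume "0 < \<epsilon>"
  then obtain N1 N2 where N: "\<forall>n\<ge>N1. \<bar>a n - L\<bar> < \<epsilon>" "\<forall>n\<ge>N2. \<bar>b n - L\<bar> < \<epsilon>"
    using assms(1,2) unfolding lc_tendsto_def by (metis lc_abs_eq_abs)
  have "\<bar>x n - L\<bar> < \<epsilon>" if "max N0 (max N1 N2) \<le> n" for n
  proof -
    have "L - a n < \<epsilon>" "b n - L < \<epsilon>" "a n \<le> x n" "x n \<le> b n"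
      using N assms(3) that unfolding abs_less_iff_linordered by auto
    then show ?thesis unfolding abs_less_iff_linordered
      by (metis diff_right_mono le_less_trans minus_diff_eq diff_left_mono)
  qed
  then show "\<exists>N. \<forall>n\<ge>N. lc_abs (x n - L) < \<epsilon>"
    by (intro exI[of _ "max N0 (max N1 N2)"]) simp
qed

lemma lc_tendsto_reindex:
  assumes "lc_tendsto a L" "\<And>N. \<exists>M. \<forall>n\<ge>M. N \<le> g n"
  shows "lc_tendsto (\<lambda>n. a (g n)) L"
  unfolding lc_tendsto_def
proof (intro allI impI)
  fix \<epsilon> :: lc
  assume "0 < \<epsilon>"
  then obtain N where "\<forall>n\<ge>N. lc_abs (a n - L) < \<epsilon>" using assms(1) unfolding lc_tendsto_def by blast
  moreover obtain M where "\<forall>n\<ge>M. N \<le> g n" using assms(2) by blast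
  ultimately show "\<exists>M. \<forall>n\<ge>M. lc_abs (a (g n) - L) < \<epsilon>" by auto
qed

definition lc_cauchy :: "(nat \<Rightarrow> lc) \<Rightarrow> bool" where
  "lc_cauchy x \<longleftrightarrow> (\<forall>\<epsilon>>0. \<exists>N. \<forall>i\<ge>N. \<forall>j\<ge>N. \<bar>x i - x j\<bar> < \<epsilon>)"

lemma lc_tendsto_imp_cauchy:
  assumes "lc_tendsto x L" shows "lc_cauchy x"
  unfolding lc_cauchy_def
proof (intro allI impI)
  fix \<epsilon> :: lc
  assume "0 < \<epsilon>"
  then obtain N where N: "\<forall>n\<ge>N. \<bar>x n - L\<bar> < lc_half \<epsilon>"
    using assms lc_half_pos unfolding lc_tendsto_def by (metis lc_abs_eq_abs)
  have "\<bar>(x i - L) + (L - x j)\<bar> < lc_half \<epsilon> + lc_half \<epsilon>" if "N \<le> i" "N \<le> j" for i j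
    using N that abs_minus_commute[of L "x j"] by (intro abs_add_less) auto
  then show "\<exists>N. \<forall>i\<ge>N. \<forall>j\<ge>N. \<bar>x i - x j\<bar> < \<epsilon>"
    by (intro exI[of _ N]) simp
qed

text \<open>Along a Cauchy sequence every coefficient is eventually constant, and the eventual
  coefficients form a left-finite function.\<close>

lemma lc_cauchy_imp_tendsto:
  assumes "lc_cauchy x"
  shows "\<exists>L. lc_tendsto x L"
proof -
  have "\<forall>k::nat. \<exists>N. \<forall>i\<ge>N. \<forall>j\<ge>N. \<bar>x i - x j\<bar> < lc_monom 1 (of_nat k)"
    using assms lc_monom_pos[of 1] unfolding lc_cauchy_def by auto
  then obtain N :: "nat \<Rightarrow> nat"
    where N: "\<And>k i j. N k \<le> i \<Longrightarrow> N k \<le> j \<Longrightarrow> \<bar>x i - x j\<bar> < lc_monom 1 (of_nat k)"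
    by metis
  define M where "M k = Max (N ` {..k})" for k
  have M_ge: "N j \<le> M k" if "j \<le> k" for j k
    unfolding M_def using that by (intro Max_ge) auto
  have M_mono: "M j \<le> M k" if "j \<le> k" for j k
    unfolding M_def using that by (intro Max_mono) auto
  define kk where "kk t = nat \<lceil>t\<rceil> + 1" for t :: rat
  have kk: "t < of_nat (kk t)" for t
    unfolding kk_def by (rule ceiling_less_of_nat_Suc)
  define cf where "cf t = coeff (x (M (kk t))) t" for t
  have cf: "coeff (x i) s = cf s" if "M k \<le> i" "s < of_nat k" for i k s
  proof -
    let ?k = "min k (kk s)"
    have "\<bar>x i - x (M (kk s))\<bar> < lc_monom 1 (of_nat ?k)"
      using that M_mono[of ?k k] M_mono[of ?k "kk s"] M_ge[of ?k ?k] by (intro N) auto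
    then have "lc_vanishes_below (of_nat ?k) (x i - x (M (kk s)))"
      by (rule lc_vanishes_below_if_abs_less)
    moreover have "s < of_nat ?k" using that kk[of s] by (simp add: min_def)
    ultimately show ?thesis unfolding cf_def lc_vanishes_below_def by simp
  qed
  have "finite {t. cf t \<noteq> 0 \<and> t < q}" for q
  proof -
    have "{t. cf t \<noteq> 0 \<and> t < q} \<subseteq> {t. coeff (x (M (kk q))) t \<noteq> 0 \<and> t < q}"
      using cf[of "kk q" "M (kk q)"] kk[of q] by auto
    then show ?thesis using lc_left_finite finite_subset by blast
  qed
  then have L: "coeff (Abs_lc cf) = cf"
    by (simp add: Abs_lc_inverse)
  define L where "L = Abs_lc cf"
  have "lc_tendsto x L"
    unfolding lc_tendsto_def
  proof (intro allI impI)
    fix \<epsilon> :: lc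
    assume "0 < \<epsilon>"
    then obtain e where e: "coeff \<epsilon> e > 0" "lc_vanishes_below e \<epsilon>"
      using lc_pos_imp_leading by blast
    have "lc_vanishes_below (of_nat (kk e)) (x n - L)" if "M (kk e) \<le> n" for n
      unfolding lc_vanishes_below_def L_def using cf[OF that] L by simp
    then show "\<exists>N. \<forall>n\<ge>N. lc_abs (x n - L) < \<epsilon>"
      using lc_abs_less_if_vanishes_below[OF e kk[of e]] by (intro exI[of _ "M (kk e)"]) simp
  qed
  then show ?thesis by blast
qed

lemma lc_psum_eq_sum: "lc_psum a n = (\<Sum>i<n. a i)"
  by (induction n) (auto simp: add.commute)

lemma lc_psum_mono: "(\<And>n. 0 \<le> a n) \<Longrightarrow> i \<le> j \<Longrightarrow> lc_psum a i \<le> lc_psum a j"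
  unfolding lc_psum_eq_sum by (rule sum_mono2) auto

lemma lc_psum_le: "(\<And>n. a n \<le> b n) \<Longrightarrow> lc_psum a n \<le> lc_psum b n"
  unfolding lc_psum_eq_sum by (rule sum_mono)

lemma lc_psum_le_sums:
  assumes "\<And>n. 0 \<le> a n" "lc_sums a s"
  shows "lc_psum a n \<le> s"
proof -
  have "\<forall>k\<ge>n. lc_psum a n \<le> lc_psum a k" by (simp add: lc_psum_mono[OF assms(1)])
  with lc_tendsto_le[OF lc_tendsto_const[of "lc_psum a n"] assms(2)[unfolded lc_sums_def]]
  show ?thesis by blast
qed

lemma lc_sums_le:
  assumes "\<And>n. a n \<le> b n" "lc_sums a s" "lc_sums b t"
  shows "s \<le> t"
  using assms(2,3) unfolding lc_sums_def by (rule lc_tendsto_le) (simp add: lc_psum_le assms(1))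

lemma lc_sums_add: "lc_sums a s \<Longrightarrow> lc_sums b t \<Longrightarrow> lc_sums (\<lambda>n. a n + b n) (s + t)"
  unfolding lc_sums_def lc_psum_eq_sum sum.distrib by (rule lc_tendsto_add)

lemma lc_sums_diff: "lc_sums a s \<Longrightarrow> lc_sums b t \<Longrightarrow> lc_sums (\<lambda>n. a n - b n) (s - t)"
  unfolding lc_sums_def lc_psum_eq_sum sum_subtractf by (rule lc_tendsto_diff)

lemma lc_sums_finite_support:
  assumes "\<And>n. n \<ge> N \<Longrightarrow> a n = 0"
  shows "lc_sums a (lc_psum a N)"
proof -
  have eq: "lc_psum a n = lc_psum a N" if "n \<ge> N" for n
    using that
  proof (induction n)
    case (Suc n)
    then show ?case using assms[of n] by (cases "Suc n = N") auto
  qed simp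
  have "lc_abs (lc_psum a n - lc_psum a N) < \<epsilon>" if "0 < \<epsilon>" "n \<ge> N" for \<epsilon> n
    using that(1) eq[OF that(2)] by simp
  then show ?thesis
    unfolding lc_sums_def lc_tendsto_def by blast
qed

lemma lc_sums_zero: "lc_sums (\<lambda>n. 0) 0"
  using lc_sums_finite_support[of 0 "\<lambda>n. 0"] by simp

lemma lc_sums_sum:
  assumes "\<And>i. i \<in> S \<Longrightarrow> lc_sums (f i) (s i)"
  shows "lc_sums (\<lambda>m. \<Sum>i\<in>S. f i m) (\<Sum>i\<in>S. s i)"
  using assms
proof (induction S rule: infinite_finite_induct)
  case (insert x F)
  then show ?case using lc_sums_add[of "f x" "s x"] by simp
qed (simp_all add: lc_sums_zero)

lemma lc_sums_term_small:
  assumes "lc_sums a s" "0 < \<epsilon>"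
  shows "\<exists>N. \<forall>m\<ge>N. \<bar>a m\<bar> < \<epsilon>"
proof -
  obtain N where N: "\<forall>i\<ge>N. \<forall>j\<ge>N. \<bar>lc_psum a i - lc_psum a j\<bar> < \<epsilon>"
    using lc_tendsto_imp_cauchy assms unfolding lc_sums_def lc_cauchy_def by blast
  then have "\<bar>lc_psum a (Suc m) - lc_psum a m\<bar> < \<epsilon>" if "N \<le> m" for m
    using N[rule_format, of "Suc m" m] that by simp
  then have "\<bar>a m\<bar> < \<epsilon>" if "N \<le> m" for m
    using that by simp
  then show ?thesis by blast
qed

lemma lc_sums_comparison:
  assumes "\<And>n. 0 \<le> a n" "\<And>n. a n \<le> b n" "lc_sums b t"
  shows "\<exists>s. lc_sums a s \<and> s \<le> t"
proof -
  have tail: "\<bar>lc_psum a i - lc_psum a j\<bar> \<le> \<bar>lc_psum b i - lc_psum b j\<bar>" for i j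
  proof -
    have ordered: "\<bar>lc_psum a i - lc_psum a j\<bar> \<le> \<bar>lc_psum b i - lc_psum b j\<bar>" if "j \<le> i" for i j
    proof -
      have "lc_psum a i - lc_psum a j = (\<Sum>n\<in>{j..<i}. a n)"
           "lc_psum b i - lc_psum b j = (\<Sum>n\<in>{j..<i}. b n)"
        unfolding lc_psum_eq_sum lessThan_atLeast0 using that by (simp_all add: sum_diff_nat_ivl)
      moreover have "0 \<le> (\<Sum>n\<in>{j..<i}. a n)" "(\<Sum>n\<in>{j..<i}. a n) \<le> (\<Sum>n\<in>{j..<i}. b n)"
        using assms(1,2) by (simp_all add: sum_nonneg sum_mono)
      ultimately show ?thesis
        using abs_ge_self[of "lc_psum b i - lc_psum b j"] by simp
    qed
    show ?thesis
    proof (cases "j \<le> i")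
      case False
      then have "\<bar>lc_psum a j - lc_psum a i\<bar> \<le> \<bar>lc_psum b j - lc_psum b i\<bar>"
        by (intro ordered) simp
      then show ?thesis by (simp add: abs_minus_commute)
    qed (rule ordered)
  qed
  have "lc_cauchy (lc_psum a)"
    unfolding lc_cauchy_def
  proof (intro allI impI)
    fix \<epsilon> :: lc
    assume "0 < \<epsilon>"
    then obtain N where "\<forall>i\<ge>N. \<forall>j\<ge>N. \<bar>lc_psum b i - lc_psum b j\<bar> < \<epsilon>"
      using lc_tendsto_imp_cauchy[OF assms(3)[unfolded lc_sums_def]] unfolding lc_cauchy_def
        by blast
    then show "\<exists>N. \<forall>i\<ge>N. \<forall>j\<ge>N. \<bar>lc_psum a i - lc_psum a j\<bar> < \<epsilon>"
      using tail le_less_trans by (intro exI[of _ N]) blast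
  qed
  then obtain s where s: "lc_sums a s"
    using lc_cauchy_imp_tendsto unfolding lc_sums_def by blast
  moreover have "s \<le> t" using lc_sums_le[OF assms(2) s assms(3)] .
  ultimately show ?thesis by blast
qed

lemma lc_sums_interleave:
  assumes "\<And>m. 0 \<le> p m" "\<And>m. 0 \<le> q m" "lc_sums (\<lambda>m. p m + q m) s"
  shows "lc_sums (\<lambda>n. if even n then p (n div 2) else q (n div 2)) s"
proof -
  define r where "r n = (if even n then p (n div 2) else q (n div 2))" for n
  let ?pq = "\<lambda>m. p m + q m"
  have ev: "lc_psum r (2 * M) = lc_psum ?pq M" for M
    by (induction M) (auto simp: r_def algebra_simps)
  have bnd: "lc_psum ?pq (n div 2) \<le> lc_psum r n \<and> lc_psum r n \<le> lc_psum ?pq ((n + 1) div 2)" for n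
  proof (cases "even n")
    case True
    then show ?thesis using ev[of "n div 2"] by simp
  next
    case False
    then obtain M where M: "n = 2 * M + 1" using oddE by blast
    have "lc_psum r n = lc_psum ?pq M + p M" using M ev[of M] by (simp add: r_def)
    moreover have "(n + 1) div 2 = Suc M" "n div 2 = M" using M by auto
    ultimately show ?thesis using assms(1,2)[of M] by (auto simp: add_increasing2)
  qed
  have reach: "\<exists>M. \<forall>n\<ge>M. N \<le> n div 2" "\<exists>M. \<forall>n\<ge>M. N \<le> (n + 1) div 2" for N :: nat
    by (rule exI[of _ "2 * N"], auto)+
  have "lc_tendsto (\<lambda>n. lc_psum ?pq (n div 2)) s" "lc_tendsto (\<lambda>n. lc_psum ?pq ((n + 1) div 2)) s"
    using lc_tendsto_reindex[OF assms(3)[unfolded lc_sums_def] reach(1)]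
      lc_tendsto_reindex[OF assms(3)[unfolded lc_sums_def] reach(2)] .
  then show ?thesis
    unfolding lc_sums_def r_def[symmetric] using lc_tendsto_squeeze bnd by blast
qed

lemma lc_tendsto_monom: "lc_tendsto (\<lambda>k. lc_monom 1 (of_nat k)) 0"
  unfolding lc_tendsto_def
proof (intro allI impI)
  fix \<epsilon> :: lc
  assume "0 < \<epsilon>"
  then obtain k where "\<forall>j\<ge>k. lc_monom 1 (of_nat j) < \<epsilon>" using lc_monom_eventually_less by blast
  moreover have "0 < lc_monom 1 (of_nat n)" for n by (simp add: lc_monom_pos)
  ultimately have "lc_abs (lc_monom 1 (of_nat n) - 0) < \<epsilon>" if "k \<le> n" for n
    using that by (simp add: less_imp_le)
  then show "\<exists>N. \<forall>n\<ge>N. lc_abs (lc_monom 1 (of_nat n) - 0) < \<epsilon>" by blast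
qed

lemma lc_cauchy_if_bracketed:
  assumes "\<And>i j. x i \<le> y j" "\<And>k. y k - x k \<le> lc_monom 1 (of_nat k)"
  shows "lc_cauchy x"
  unfolding lc_cauchy_def
proof (intro allI impI)
  fix \<epsilon> :: lc
  assume "0 < \<epsilon>"
  then obtain k where k: "\<forall>j\<ge>k. lc_monom 1 (of_nat j) < \<epsilon>" using lc_monom_eventually_less by blast
  have "x i - x j < \<epsilon>" if "k \<le> j" for i j
  proof -
    have "x i - x j \<le> y j - x j" using assms(1) by (rule diff_right_mono)
    also have "\<dots> \<le> lc_monom 1 (of_nat j)" by (rule assms(2))
    also have "\<dots> < \<epsilon>" using k that by blast
    finally show ?thesis .
  qed
  then show "\<exists>N. \<forall>i\<ge>N. \<forall>j\<ge>N. \<bar>x i - x j\<bar> < \<epsilon>"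
    unfolding abs_less_iff_linordered by (intro exI[of _ k]) (simp add: minus_diff_eq)
qed

section \<open>Intervals and their lengths\<close>

definition lc_ivl :: "lc \<Rightarrow> lc \<Rightarrow> bool \<Rightarrow> bool \<Rightarrow> lc set" where
  "lc_ivl a b ca cb = {x. (if ca then a \<le> x else a < x) \<and> (if cb then x \<le> b else x < b)}"

definition lc_interval_or_empty :: "lc set \<Rightarrow> bool" where
  "lc_interval_or_empty J \<longleftrightarrow> J = {} \<or> lc_interval J"

lemma lc_len_empty [simp]: "lc_len {} = 0" unfolding lc_len_def by simp

lemma lc_ivl_family_member: "lc_ivl_family I \<Longrightarrow> lc_interval_or_empty (I n)"
  unfolding lc_ivl_family_def lc_interval_or_empty_def by blast

lemma lc_interval_iff_ivl: "lc_interval J \<longleftrightarrow> (\<exists>a b ca cb. a < b \<and> J = lc_ivl a b ca cb)"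
proof
  assume "lc_interval J"
  then obtain a b where ab: "a < b" and d: "J = {x. a \<le> x \<and> x \<le> b} \<or> J = {x. a \<le> x \<and> x < b} \<or>
       J = {x. a < x \<and> x \<le> b} \<or> J = {x. a < x \<and> x < b}" unfolding lc_interval_def by blast
  have "lc_ivl a b True True = {x. a \<le> x \<and> x \<le> b}" "lc_ivl a b True False = {x. a \<le> x \<and> x < b}"
       "lc_ivl a b False True = {x. a < x \<and> x \<le> b}" "lc_ivl a b False False = {x. a < x \<and> x < b}"
    unfolding lc_ivl_def by simp_all
  thus "\<exists>a b ca cb. a < b \<and> J = lc_ivl a b ca cb" using d ab by metis
next
  assume "\<exists>a b ca cb. a < b \<and> J = lc_ivl a b ca cb"
  then obtain a b ca cb where ab: "a < b" and J: "J = lc_ivl a b ca cb" by blast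
  have "J = {x. a \<le> x \<and> x \<le> b} \<or> J = {x. a \<le> x \<and> x < b} \<or>
       J = {x. a < x \<and> x \<le> b} \<or> J = {x. a < x \<and> x < b}"
    unfolding J lc_ivl_def by (cases ca; cases cb) simp_all
  thus "lc_interval J" unfolding lc_interval_def using ab by blast
qed

lemma lc_ivl_bounds: "a < x \<Longrightarrow> x < b \<Longrightarrow> x \<in> lc_ivl a b ca cb"
  "x \<in> lc_ivl a b ca cb \<Longrightarrow> a \<le> x" "x \<in> lc_ivl a b ca cb \<Longrightarrow> x \<le> b"
  unfolding lc_ivl_def by (auto split: if_splits)

lemma lower_bound_le_if_open_subset:
  fixes a b a' :: "'a :: dense_linorder"
  assumes "a < b" "\<And>x. a < x \<Longrightarrow> x < b \<Longrightarrow> x \<in> J" "\<And>x. x \<in> J \<Longrightarrow> a' \<le> x"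
  shows "a' \<le> a"
proof (rule ccontr)
  assume "\<not> a' \<le> a" hence "a < min a' b" using assms(1) by (simp add: not_le)
  then obtain z where z: "a < z" "z < min a' b" using dense by blast
  hence "z \<in> J" using assms(2) by simp
  thus False using assms(3) z by fastforce
qed

lemma upper_bound_ge_if_open_subset:
  fixes a b b' :: "'a :: dense_linorder"
  assumes "a < b" "\<And>x. a < x \<Longrightarrow> x < b \<Longrightarrow> x \<in> J" "\<And>x. x \<in> J \<Longrightarrow> x \<le> b'"
  shows "b \<le> b'"
proof (rule ccontr)
  assume "\<not> b \<le> b'" hence "max a b' < b" using assms(1) by (simp add: not_le)
  then obtain z where z: "max a b' < z" "z < b" using dense by blast
  hence "z \<in> J" using assms(2) by simp
  thus False using assms(3) z by fastforce
qed

lemma lc_len_ivl: assumes "a < b" shows "lc_len (lc_ivl a b ca cb) = b - a"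
proof -
  let ?J = "lc_ivl a b ca cb"
  have ne: "?J \<noteq> {}" using dense[OF assms] lc_ivl_bounds(1) by blast
  have "(THE l. \<exists>a' b'. a' < b' \<and> l = b' - a' \<and>
      (?J = {x. a' \<le> x \<and> x \<le> b'} \<or> ?J = {x. a' \<le> x \<and> x < b'} \<or>
       ?J = {x. a' < x \<and> x \<le> b'} \<or> ?J = {x. a' < x \<and> x < b'})) = b - a"
  proof (rule the_equality)
    have "lc_interval ?J" unfolding lc_interval_iff_ivl using assms by blast
    thus "\<exists>a' b'. a' < b' \<and> b - a = b' - a' \<and>
      (?J = {x. a' \<le> x \<and> x \<le> b'} \<or> ?J = {x. a' \<le> x \<and> x < b'} \<or>
       ?J = {x. a' < x \<and> x \<le> b'} \<or> ?J = {x. a' < x \<and> x < b'})"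
      using assms unfolding lc_ivl_def by (cases ca; cases cb) auto
  next
    fix l assume "\<exists>a' b'. a' < b' \<and> l = b' - a' \<and>
      (?J = {x. a' \<le> x \<and> x \<le> b'} \<or> ?J = {x. a' \<le> x \<and> x < b'} \<or>
       ?J = {x. a' < x \<and> x \<le> b'} \<or> ?J = {x. a' < x \<and> x < b'})"
    then obtain a' b' where ab': "a' < b'" "l = b' - a'" and
      d: "?J = {x. a' \<le> x \<and> x \<le> b'} \<or> ?J = {x. a' \<le> x \<and> x < b'} \<or>
       ?J = {x. a' < x \<and> x \<le> b'} \<or> ?J = {x. a' < x \<and> x < b'}" by blast
    have s1: "a' < x \<Longrightarrow> x < b' \<Longrightarrow> x \<in> ?J" for x using d by (elim disjE; simp add: le_less)
    have s2: "x \<in> ?J \<Longrightarrow> a' \<le> x \<and> x \<le> b'" for x using d by (elim disjE; simp add: le_less)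
    have "a' \<le> a" using lower_bound_le_if_open_subset[of a b ?J a'] assms lc_ivl_bounds(1) s2
      by blast
    moreover have "a \<le> a'" using lower_bound_le_if_open_subset[of a' b' ?J a] ab'(1) s1
      lc_ivl_bounds(2) by blast
    moreover have "b' \<le> b" using upper_bound_ge_if_open_subset[of a' b' ?J b] ab'(1) s1
      lc_ivl_bounds(3) by blast
    moreover have "b \<le> b'" using upper_bound_ge_if_open_subset[of a b ?J b'] assms
      lc_ivl_bounds(1) s2 by blast
    ultimately show "l = b - a" using ab'(2) by simp
  qed
  thus ?thesis unfolding lc_len_def using ne by simp
qed

definition overlap_len :: "'a::linordered_ab_group_add \<Rightarrow> 'a \<Rightarrow> 'a \<Rightarrow> 'a \<Rightarrow> 'a" where
  "overlap_len lo hi a b = max 0 (min hi b - max lo a)"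

lemma overlap_len_split3:
  fixes lo hi al be :: "'a::linordered_ab_group_add"
  assumes "lo \<le> hi" "al \<le> be"
  shows "hi - lo = max 0 (min hi al - lo) + overlap_len lo hi al be + max 0 (hi - max lo be)"
  using assms unfolding overlap_len_def
  by (cases "hi \<le> al"; cases "lo \<le> al"; cases "hi \<le> be"; cases "lo \<le> be")
    (auto simp: min_def max_def algebra_simps)

lemma lc_ivl_Int_lessThan:
  fixes a b c :: lc
  assumes "a < b"
  shows "(c \<le> a \<and> lc_ivl a b ca cb \<inter> {x. x < c} = {}) \<or>
         (a < c \<and> lc_ivl a b ca cb \<inter> {x. x < c} = lc_ivl a (min b c) ca (cb \<and> b < c))"
proof (cases "c \<le> a")
  case True
  have "lc_ivl a b ca cb \<inter> {x. x < c} = {}"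
    using True lc_ivl_bounds(2) by (fastforce dest: le_less_trans)
  thus ?thesis using True by blast
next
  case False
  have "lc_ivl a b ca cb \<inter> {x. x < c} = lc_ivl a (min b c) ca (cb \<and> b < c)"
  proof (cases "b < c")
    case True
    thus ?thesis unfolding lc_ivl_def by (auto simp: min_def dest: le_less_trans less_trans)
  next
    case False
    thus ?thesis unfolding lc_ivl_def by (auto simp: min_def not_less dest: less_le_trans)
  qed
  thus ?thesis using False by simp
qed

lemma lc_ivl_Int_greaterThan:
  fixes a b c :: lc
  assumes "a < b"
  shows "(b \<le> c \<and> lc_ivl a b ca cb \<inter> {x. c < x} = {}) \<or>
         (c < b \<and> lc_ivl a b ca cb \<inter> {x. c < x} = lc_ivl (max a c) b (ca \<and> c < a) cb)"
proof (cases "b \<le> c")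
  case True
  have "lc_ivl a b ca cb \<inter> {x. c < x} = {}"
    using True lc_ivl_bounds(3) by (fastforce dest: less_le_trans)
  thus ?thesis using True by blast
next
  case False
  have "lc_ivl a b ca cb \<inter> {x. c < x} = lc_ivl (max a c) b (ca \<and> c < a) cb"
  proof (cases "c < a")
    case True
    thus ?thesis unfolding lc_ivl_def by (auto simp: max_def dest: less_le_trans less_trans)
  next
    case False
    thus ?thesis unfolding lc_ivl_def by (auto simp: max_def not_less dest: le_less_trans)
  qed
  thus ?thesis using False by simp
qed

lemma lc_interval_or_empty_ivl: "a < b \<Longrightarrow> lc_interval_or_empty (lc_ivl a b ca cb)"
  unfolding lc_interval_or_empty_def lc_interval_iff_ivl by blast

lemma lc_interval_or_empty_cases:
  "lc_interval_or_empty J \<Longrightarrow> J = {} \<or> (\<exists>a b ca cb. a < b \<and> J = lc_ivl a b ca cb)"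
  unfolding lc_interval_or_empty_def lc_interval_iff_ivl by blast

lemma lc_interval_or_empty_Int_lessThan: assumes "lc_interval_or_empty J"
  shows "lc_interval_or_empty (J \<inter> {x. x < c})"
  using lc_interval_or_empty_cases[OF assms]
proof (elim disjE exE conjE)
  fix a b ca cb assume ab: "a < b" and J: "J = lc_ivl a b ca cb"
  from lc_ivl_Int_lessThan[OF ab, of c ca cb] show ?thesis
  proof (elim disjE conjE)
    assume "lc_ivl a b ca cb \<inter> {x. x < c} = {}" thus ?thesis using J
      by (simp add: lc_interval_or_empty_def)
  next
    assume h: "a < c" "lc_ivl a b ca cb \<inter> {x. x < c} = lc_ivl a (min b c) ca (cb \<and> b < c)"
    have "a < min b c" using ab h(1) by simp
    thus ?thesis using lc_interval_or_empty_ivl J h(2) by simp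
  qed
qed (simp add: lc_interval_or_empty_def)

lemma lc_interval_or_empty_Int_greaterThan: assumes "lc_interval_or_empty J"
  shows "lc_interval_or_empty (J \<inter> {x. c < x})"
  using lc_interval_or_empty_cases[OF assms]
proof (elim disjE exE conjE)
  fix a b ca cb assume ab: "a < b" and J: "J = lc_ivl a b ca cb"
  from lc_ivl_Int_greaterThan[OF ab, of c ca cb] show ?thesis
  proof (elim disjE conjE)
    assume "lc_ivl a b ca cb \<inter> {x. c < x} = {}" thus ?thesis using J
      by (simp add: lc_interval_or_empty_def)
  next
    assume h: "c < b" "lc_ivl a b ca cb \<inter> {x. c < x} = lc_ivl (max a c) b (ca \<and> c < a) cb"
    have "max a c < b" using ab h(1) by simp
    thus ?thesis using lc_interval_or_empty_ivl J h(2) by simp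
  qed
qed (simp add: lc_interval_or_empty_def)

lemma Int_open_eq_Int_Int: "J \<inter> {x. al < x \<and> x < be} = (J \<inter> {x. x < be}) \<inter> {x. al < x}" by auto

lemma lc_interval_or_empty_Int_open:
  "lc_interval_or_empty J \<Longrightarrow> lc_interval_or_empty (J \<inter> {x. al < x \<and> x < be})"
  unfolding Int_open_eq_Int_Int
  by (intro lc_interval_or_empty_Int_greaterThan lc_interval_or_empty_Int_lessThan)

lemma lc_len_ivl_Int_lessThan: assumes "a < b" shows
  "lc_len (lc_ivl a b ca cb \<inter> {x. x < c}) = max 0 (min b c - a)"
  using lc_ivl_Int_lessThan[OF assms, of c ca cb]
proof (elim disjE conjE)
  assume "c \<le> a" "lc_ivl a b ca cb \<inter> {x. x < c} = {}"
  moreover have "min b c - a \<le> 0" using \<open>c \<le> a\<close> by (simp add: min.coboundedI2)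
  ultimately show ?thesis by (simp add: max_absorb1)
next
  assume h: "a < c" "lc_ivl a b ca cb \<inter> {x. x < c} = lc_ivl a (min b c) ca (cb \<and> b < c)"
  have "a < min b c" using h assms by simp
  hence "0 \<le> min b c - a" by (simp add: less_imp_le)
  thus ?thesis using h lc_len_ivl \<open>a < min b c\<close> by (simp add: max_absorb2)
qed

lemma lc_len_ivl_Int_greaterThan: assumes "a < b" shows
  "lc_len (lc_ivl a b ca cb \<inter> {x. c < x}) = max 0 (b - max a c)"
  using lc_ivl_Int_greaterThan[OF assms, of c ca cb]
proof (elim disjE conjE)
  assume "b \<le> c" "lc_ivl a b ca cb \<inter> {x. c < x} = {}"
  moreover have "b - max a c \<le> 0" using \<open>b \<le> c\<close> by (simp add: max.coboundedI2)
  ultimately show ?thesis by (simp add: max_absorb1)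
next
  assume h: "c < b" "lc_ivl a b ca cb \<inter> {x. c < x} = lc_ivl (max a c) b (ca \<and> c < a) cb"
  have "max a c < b" using h assms by simp
  hence "0 \<le> b - max a c" by (simp add: less_imp_le)
  thus ?thesis using h lc_len_ivl \<open>max a c < b\<close> by (simp add: max_absorb2)
qed

lemma lc_len_ivl_Int_open: assumes "a < b"
  shows "lc_len (lc_ivl a b ca cb \<inter> {x. al < x \<and> x < be}) = overlap_len a b al be"
  using lc_ivl_Int_lessThan[OF assms, of be ca cb]
proof (elim disjE conjE)
  assume "be \<le> a" "lc_ivl a b ca cb \<inter> {x. x < be} = {}"
  moreover have "min b be - max a al \<le> 0" using \<open>be \<le> a\<close>
  proof -
    have "min b be \<le> max a al" using \<open>be \<le> a\<close> by (meson max.coboundedI1 min.coboundedI2 order.trans)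
    thus ?thesis by simp
  qed
  ultimately show ?thesis by (simp add: max_absorb1 overlap_len_def Int_open_eq_Int_Int)
next
  assume h: "a < be" "lc_ivl a b ca cb \<inter> {x. x < be} = lc_ivl a (min b be) ca (cb \<and> b < be)"
  have "a < min b be" using h assms by simp
  thus ?thesis unfolding Int_open_eq_Int_Int h(2) overlap_len_def
    by (subst lc_len_ivl_Int_greaterThan) auto
qed

text \<open>For the empty set any \<open>lo = hi\<close> qualifies.\<close>

definition lc_endpoints :: "lc set \<Rightarrow> lc \<Rightarrow> lc \<Rightarrow> bool" where
  "lc_endpoints J lo hi \<longleftrightarrow> lo \<le> hi \<and> (\<forall>x\<in>J. lo \<le> x \<and> x \<le> hi) \<and> lc_len J = hi - lo \<and>
     (J \<noteq> {} \<longrightarrow> lo < hi \<and> (\<forall>x. lo < x \<and> x < hi \<longrightarrow> x \<in> J)) \<and>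
     (\<forall>al be. lc_len (J \<inter> {x. al < x \<and> x < be}) = overlap_len lo hi al be) \<and>
     (\<forall>c. lc_len (J \<inter> {x. x < c}) = max 0 (min hi c - lo)) \<and>
     (\<forall>c. lc_len (J \<inter> {x. c < x}) = max 0 (hi - max lo c))"

lemma lc_interval_or_empty_endpoints:
  assumes "lc_interval_or_empty J"
  shows "\<exists>lo hi. lc_endpoints J lo hi"
  using lc_interval_or_empty_cases[OF assms]
proof (elim disjE exE conjE)
  assume "J = {}"
  then show ?thesis
    unfolding lc_endpoints_def by (intro exI[of _ 0]) (auto simp: overlap_len_def max_def min_def)
next
  fix a b ca cb
  assume ab: "a < b" and J: "J = lc_ivl a b ca cb"
  show ?thesis
    unfolding lc_endpoints_def
    by (intro exI[of _ a] exI[of _ b])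
      (use ab in \<open>auto simp: J lc_len_ivl lc_len_ivl_Int_open lc_len_ivl_Int_lessThan
        lc_len_ivl_Int_greaterThan intro: lc_ivl_bounds\<close>)
qed

definition lc_endpoint_pair :: "lc set \<Rightarrow> lc \<times> lc" where
  "lc_endpoint_pair J = (SOME p. lc_endpoints J (fst p) (snd p))"

definition lc_lower :: "lc set \<Rightarrow> lc" where "lc_lower J = fst (lc_endpoint_pair J)"

definition lc_upper :: "lc set \<Rightarrow> lc" where "lc_upper J = snd (lc_endpoint_pair J)"

lemma lc_endpoints_lower_upper:
  assumes "lc_interval_or_empty J"
  shows "lc_endpoints J (lc_lower J) (lc_upper J)"
proof -
  obtain lo hi where "lc_endpoints J lo hi"
    using lc_interval_or_empty_endpoints[OF assms] by blast
  then have "\<exists>p. lc_endpoints J (fst p) (snd p)" by (intro exI[of _ "(lo, hi)"]) simp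
  then show ?thesis unfolding lc_lower_def lc_upper_def lc_endpoint_pair_def by (rule someI_ex)
qed

lemma
  assumes "lc_interval_or_empty J"
  shows lc_lower_le_upper: "lc_lower J \<le> lc_upper J"
    and lc_lower_upper_bounds: "x \<in> J \<Longrightarrow> lc_lower J \<le> x \<and> x \<le> lc_upper J"
    and lc_len_eq_upper_minus_lower: "lc_len J = lc_upper J - lc_lower J"
    and lc_lower_less_upper: "J \<noteq> {} \<Longrightarrow> lc_lower J < lc_upper J"
    and lc_mem_if_between_endpoints: "J \<noteq> {} \<Longrightarrow> lc_lower J < y \<Longrightarrow> y < lc_upper J \<Longrightarrow> y \<in> J"
    and lc_len_Int_open:
      "lc_len (J \<inter> {x. al < x \<and> x < be}) = overlap_len (lc_lower J) (lc_upper J) al be"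
    and lc_len_Int_lessThan:
      "lc_len (J \<inter> {x. x < c}) = max 0 (min (lc_upper J) c - lc_lower J)"
    and lc_len_Int_greaterThan:
      "lc_len (J \<inter> {x. c < x}) = max 0 (lc_upper J - max (lc_lower J) c)"
  using lc_endpoints_lower_upper[OF assms] unfolding lc_endpoints_def by blast+

lemma lc_len_nonneg: "lc_interval_or_empty J \<Longrightarrow> 0 \<le> lc_len J"
  using lc_len_eq_upper_minus_lower lc_lower_le_upper by simp

lemma sum_disjoint_subintervals_le:
  fixes a b :: "'i \<Rightarrow> 'a :: {linordered_ab_group_add, dense_linorder}"
  assumes "finite S" "\<forall>i\<in>S. A \<le> a i \<and> a i < b i \<and> b i \<le> B"
    "\<forall>i\<in>S. \<forall>j\<in>S. i \<noteq> j \<longrightarrow> (\<forall>x. \<not> (a i < x \<and> x < b i \<and> a j < x \<and> x < b j))" "A \<le> B"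
  shows "(\<Sum>i\<in>S. b i - a i) \<le> B - A"
  using assms
proof (induction "card S" arbitrary: S B rule: less_induct)
  case less
  show ?case
  proof (cases "S = {}")
    case True thus ?thesis using less.prems(4) by simp
  next
    case False
    have "Max (a ` S) \<in> a ` S" using less.prems(1) False by (intro Max_in) auto
    then obtain k where k: "k \<in> S" "a k = Max (a ` S)" by (metis imageE)
    have kmax: "a i \<le> a k" if "i \<in> S" for i using k less.prems(1) that by simp
    let ?S' = "S - {k}"
    have bi: "b i \<le> a k" if "i \<in> ?S'" for i
    proof (rule ccontr)
      assume "\<not> b i \<le> a k"
      hence "a k < min (b i) (b k)" using less.prems(2) k(1) by (simp add: not_le)
      then obtain z where z: "a k < z" "z < min (b i) (b k)" using dense by blast
      have "a i < z" using kmax[of i] that z(1) by (meson DiffD1 le_less_trans)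
      moreover have "z < b i" "z < b k" using z(2) by auto
      moreover have "i \<in> S" "i \<noteq> k" using that by auto
      ultimately show False using less.prems(3) k(1) z(1) by blast
    qed
    have ih: "(\<Sum>i\<in>?S'. b i - a i) \<le> a k - A"
    proof (rule less.hyps)
      show "card ?S' < card S" by (rule card_Diff1_less[OF less.prems(1) k(1)])
      show "finite ?S'" using less.prems(1) by simp
      show "\<forall>i\<in>?S'. A \<le> a i \<and> a i < b i \<and> b i \<le> a k" using less.prems(2) bi by blast
      show "\<forall>i\<in>?S'. \<forall>j\<in>?S'. i \<noteq> j \<longrightarrow> (\<forall>x. \<not> (a i < x \<and> x < b i \<and> a j < x \<and> x < b j))"
        using less.prems(3) by blast
      show "A \<le> a k" using less.prems(2) k(1) by blast
    qed
    have "(\<Sum>i\<in>S. b i - a i) = (b k - a k) + (\<Sum>i\<in>?S'. b i - a i)"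
      using k(1) less.prems(1) by (simp add: sum.remove)
    also have "\<dots> \<le> (b k - a k) + (a k - A)" using ih by (rule add_left_mono)
    also have "\<dots> = b k - A" by simp
    also have "\<dots> \<le> B - A" using less.prems(2) k(1) by simp
    finally show ?thesis .
  qed
qed

lemma sum_lc_len_disjoint_le:
  fixes P :: "'i \<Rightarrow> lc set"
  assumes "finite S" "\<forall>i\<in>S. lc_interval_or_empty (P i) \<and> P i \<subseteq> J"
    "\<forall>i\<in>S. \<forall>j\<in>S. i \<noteq> j \<longrightarrow> P i \<inter> P j = {}" "lc_interval_or_empty J"
  shows "(\<Sum>i\<in>S. lc_len (P i)) \<le> lc_len J"
proof -
  let ?S = "{i\<in>S. P i \<noteq> {}}"
  have "(\<Sum>i\<in>S. lc_len (P i)) = (\<Sum>i\<in>?S. lc_len (P i))"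
    using assms(1) by (intro sum.mono_neutral_right) auto
  also have "\<dots> = (\<Sum>i\<in>?S. lc_upper (P i) - lc_lower (P i))"
    using assms(2) lc_len_eq_upper_minus_lower by (intro sum.cong) auto
  also have "\<dots> \<le> lc_upper J - lc_lower J"
  proof (rule sum_disjoint_subintervals_le)
    show "finite ?S" using assms(1) by simp
    show "lc_lower J \<le> lc_upper J" using lc_lower_le_upper[OF assms(4)] .
    show "\<forall>i\<in>?S. lc_lower J \<le> lc_lower (P i) \<and> lc_lower (P i) < lc_upper (P i)
        \<and> lc_upper (P i) \<le> lc_upper J"
    proof
      fix i assume i: "i \<in> ?S"
      hence iv: "lc_interval_or_empty (P i)" "P i \<subseteq> J" "P i \<noteq> {}" using assms(2) by auto
      have lt: "lc_lower (P i) < lc_upper (P i)" using lc_lower_less_upper iv by blast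
      have op: "\<And>x. lc_lower (P i) < x \<Longrightarrow> x < lc_upper (P i) \<Longrightarrow> x \<in> P i"
        using lc_mem_if_between_endpoints iv by blast
      have m: "\<And>x. x \<in> P i \<Longrightarrow> lc_lower J \<le> x \<and> x \<le> lc_upper J"
        using lc_lower_upper_bounds[OF assms(4)] iv(2) by blast
      have "lc_lower J \<le> lc_lower (P i)" using lower_bound_le_if_open_subset[OF lt op] m by blast
      moreover have "lc_upper (P i) \<le> lc_upper J" using upper_bound_ge_if_open_subset[OF lt op] m
        by blast
      ultimately show "lc_lower J \<le> lc_lower (P i) \<and> lc_lower (P i) < lc_upper (P i)
          \<and> lc_upper (P i) \<le> lc_upper J" using lt by blast
    qed
    show "\<forall>i\<in>?S. \<forall>j\<in>?S. i \<noteq> j \<longrightarrow> (\<forall>x. \<not> (lc_lower (P i) < x \<and> x < lc_upper (P i)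
        \<and> lc_lower (P j) < x \<and> x < lc_upper (P j)))"
    proof (intro ballI impI allI notI)
      fix i j x assume h: "i \<in> ?S" "j \<in> ?S" "i \<noteq> j" "lc_lower (P i) < x \<and> x < lc_upper (P i)
          \<and> lc_lower (P j) < x \<and> x < lc_upper (P j)"
      have "x \<in> P i" using h(1,4) assms(2) lc_mem_if_between_endpoints by blast
      moreover have "x \<in> P j" using h(2,4) assms(2) lc_mem_if_between_endpoints by blast
      ultimately show False using assms(3) h(1-3) by blast
    qed
  qed
  also have "\<dots> = lc_len J" using lc_len_eq_upper_minus_lower[OF assms(4)] by simp
  finally show ?thesis .
qed

lemma overlap_len_concat:
  fixes lo hi a L b :: "'a::linordered_ab_group_add"
  assumes "lo \<le> hi" "a \<le> L" "L \<le> b"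
  shows "overlap_len lo hi a L + overlap_len lo hi L b = overlap_len lo hi a b"
  using assms unfolding overlap_len_def
  by (cases "hi \<le> L"; cases "lo \<le> L"; cases "hi \<le> b"; cases "lo \<le> a"; cases "hi \<le> a";
      cases "lo \<le> b")
    (auto simp: min_def max_def algebra_simps)

lemma overlap_len_antimono_left:
  fixes lo hi L R b :: "'a::linordered_ab_group_add"
  assumes "L \<le> R"
  shows "overlap_len lo hi R b \<le> overlap_len lo hi L b"
  using assms unfolding overlap_len_def
  by (cases "lo \<le> L"; cases "lo \<le> R")
    (auto simp: min_def max_def algebra_simps intro: max.coboundedI2)

lemma overlap_len_nonneg: "0 \<le> overlap_len lo hi a b" unfolding overlap_len_def by simp

lemma overlap_len_le:
  fixes lo hi a b :: "'a::linordered_ab_group_add"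
  assumes "lo \<le> hi" shows "overlap_len lo hi a b \<le> hi - lo"
proof (cases "hi \<le> b \<or> \<not> lo \<le> a")
  case False
  hence "b + lo \<le> hi + a" by (intro add_mono) auto
  thus ?thesis using False assms by (auto simp: overlap_len_def min_def max_def algebra_simps)
next
  case True
  thus ?thesis using assms
    by (cases "hi \<le> b"; cases "lo \<le> a") (auto simp: overlap_len_def min_def max_def algebra_simps)
qed

lemma overlap_len_gap:
  fixes lo hi a b :: "'a::linordered_ab_group_add"
  assumes "lo \<le> hi" "a \<le> b"
  shows "a \<le> max a (min b lo)" "max a (min b lo) \<le> min b (max a hi)" "min b (max a hi) \<le> b"
    "(max a (min b lo) - a) + (b - min b (max a hi)) + overlap_len lo hi a b = b - a"
  using assms unfolding overlap_len_def
  by (cases "hi \<le> b"; cases "lo \<le> a"; cases "lo \<le> b"; cases "hi \<le> a";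
      auto simp: min_def max_def algebra_simps)+

lemma double_le_add_cases:
  fixes P Q M :: "'a::linordered_ab_group_add"
  assumes "M + M \<le> P + Q" shows "M \<le> P \<or> M \<le> Q"
proof (rule ccontr)
  assume "\<not> (M \<le> P \<or> M \<le> Q)"
  hence "P + Q < M + M" by (simp add: not_le add_strict_mono)
  thus False using assms by simp
qed

section \<open>Countable covers of an interval\<close>

lemma overlap_len_outer_parts_le:
  fixes lo hi a L R b :: "'a::linordered_ab_group_add"
  assumes "lo \<le> hi" "a \<le> L" "L \<le> R" "R \<le> b"
  shows "overlap_len lo hi a L + overlap_len lo hi R b \<le> overlap_len lo hi a b"
proof -
  have "overlap_len lo hi a L + overlap_len lo hi R b
      \<le> overlap_len lo hi a L + overlap_len lo hi L b"
    using overlap_len_antimono_left[OF assms(3)] by (rule add_left_mono)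
  also have "\<dots> = overlap_len lo hi a b"
    using overlap_len_concat[OF assms(1,2) order.trans[OF assms(3,4)]] .
  finally show ?thesis .
qed

text \<open>Induction on \<open>F\<close>: removing the interval \<open>i\<close> leaves the free parts \<open>[a, L]\<close> and
  \<open>[R, b]\<close>; as the requested width halves with each removed interval, one of the two parts
  satisfies the hypothesis for the remaining intervals.\<close>

lemma finite_cover_leaves_gap:
  fixes lo hi :: "'i \<Rightarrow> lc"
  assumes "finite F" "\<forall>i\<in>F. lo i \<le> hi i" "a \<le> b" "0 < c"
    "lc_monom (2 ^ card F * c) e + (\<Sum>i\<in>F. overlap_len (lo i) (hi i) a b) \<le> b - a"
  shows "\<exists>u. a \<le> u \<and> u + lc_monom c e \<le> b \<and>
     (\<forall>i\<in>F. \<forall>x. u < x \<and> x < u + lc_monom c e \<longrightarrow> \<not> (lo i \<le> x \<and> x \<le> hi i))"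
  using assms
proof (induction F arbitrary: a b rule: finite_induct)
  case empty
  then show ?case by (intro exI[of _ a]) (simp add: le_diff_eq add.commute)
next
  case (insert i F)
  define L where "L = max a (min b (lo i))"
  define R where "R = min b (max a (hi i))"
  let ?M = "lc_monom (2 ^ card F * c) e"
  let ?S = "\<lambda>a b. \<Sum>j\<in>F. overlap_len (lo j) (hi j) a b"
  have loi: "lo i \<le> hi i" using insert.prems(1) by simp
  have aL: "a \<le> L" and LR: "L \<le> R" and Rb: "R \<le> b"
    and eqn: "(L - a) + (b - R) + overlap_len (lo i) (hi i) a b = b - a"
    using overlap_len_gap[OF loi insert.prems(2)] unfolding L_def R_def by auto
  have parts: "?S a L + ?S R b \<le> ?S a b"
    unfolding sum.distrib[symmetric] using insert.prems(1) aL LR Rb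
    by (intro sum_mono overlap_len_outer_parts_le) auto
  have "?M + ?M \<le> (b - a) - (overlap_len (lo i) (hi i) a b + ?S a b)"
    using insert.prems(4) insert.hyps by (simp add: lc_monom_add algebra_simps le_diff_eq)
  also have "\<dots> = ((L - a) + (b - R)) - ?S a b"
    using eqn by (simp add: algebra_simps)
  also have "\<dots> \<le> ((L - a) + (b - R)) - (?S a L + ?S R b)"
    using parts by (rule diff_left_mono)
  also have "\<dots> = ((L - a) - ?S a L) + ((b - R) - ?S R b)"
    by (simp add: algebra_simps)
  finally have "?M + ?M \<le> ((L - a) - ?S a L) + ((b - R) - ?S R b)" .
  then have "?M \<le> (L - a) - ?S a L \<or> ?M \<le> (b - R) - ?S R b"
    by (rule double_le_add_cases)
  then obtain a' b' where part: "(a' = a \<and> b' = L) \<or> (a' = R \<and> b' = b)"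
    and room: "?M + ?S a' b' \<le> b' - a'"
    by (auto simp: le_diff_eq add.commute)
  have "a \<le> a'" "a' \<le> b'" "b' \<le> b" using part aL LR Rb by auto
  then obtain u where u: "a' \<le> u" "u + lc_monom c e \<le> b'"
    "\<forall>j\<in>F. \<forall>x. u < x \<and> x < u + lc_monom c e \<longrightarrow> \<not> (lo j \<le> x \<and> x \<le> hi j)"
    using insert.IH[OF _ _ insert.prems(3) room] insert.prems(1) by auto
  have "\<not> (lo i \<le> x \<and> x \<le> hi i)" if "u < x" "x < u + lc_monom c e" for x
  proof -
    have "a' < x" "x < b'" using u(1,2) that by auto
    then have "x < lo i \<or> hi i < x"
      using part \<open>a \<le> a'\<close> \<open>b' \<le> b\<close> unfolding L_def R_def
      by (auto simp: less_max_iff_disj min_less_iff_disj)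
    then show ?thesis by auto
  qed
  then show ?case
    using u \<open>a \<le> a'\<close> \<open>b' \<le> b\<close> by (intro exI[of _ u]) auto
qed

lemma lc_len_Int_open_le: "lc_interval_or_empty J \<Longrightarrow> lc_len (J \<inter> {x. al < x \<and> x < be}) \<le> lc_len J"
  using lc_len_Int_open[of J al be] lc_len_eq_upper_minus_lower[of J]
    overlap_len_le[OF lc_lower_le_upper[of J]] by simp

lemma lc_len_Int_open_nonneg: "lc_interval_or_empty J \<Longrightarrow> 0 \<le> lc_len (J \<inter> {x. al < x \<and> x < be})"
  using lc_len_Int_open[of J al be] overlap_len_nonneg by simp

text \<open>Two points \<open>u + r d\<^sup>e\<close> and \<open>u + r' d\<^sup>e\<close> with \<open>r \<noteq> r'\<close> are further apart than
  \<open>d\<^sup>e\<^sup>+\<^sup>1\<close>, so each of the sets contains at most one of them, while there are uncountably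
  many of them.\<close>

lemma short_sets_miss_monom_point:
  fixes J :: "nat \<Rightarrow> lc set"
  assumes "0 < c"
    and short: "\<And>m x y. x \<in> J m \<Longrightarrow> y \<in> J m \<Longrightarrow> y - x < lc_monom 1 (e + 1)"
  obtains r where "0 < r" "r < c" "\<And>m. u + lc_monom r e \<notin> J m"
proof -
  have "\<not> (\<forall>r\<in>{0<..<c}. \<exists>m. u + lc_monom r e \<in> J m)"
  proof
    assume "\<forall>r\<in>{0<..<c}. \<exists>m. u + lc_monom r e \<in> J m"
    then obtain f where f: "\<And>r. r \<in> {0<..<c} \<Longrightarrow> u + lc_monom r e \<in> J (f r)"
      by metis
    have eq: "r = r'" if "r \<in> {0<..<c}" "r' \<in> {0<..<c}" "f r = f r'" "r \<le> r'" for r r'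
    proof (rule ccontr)
      assume "r \<noteq> r'"
      then have "lc_monom 1 (e + 1) < lc_monom (r' - r) e"
        using that(4) by (intro lc_monom_less_exponent) auto
      moreover have "(u + lc_monom r' e) - (u + lc_monom r e) = lc_monom (r' - r) e"
        by (simp add: lc_monom_diff[symmetric])
      moreover have "u + lc_monom r' e \<in> J (f r)" using f[OF that(2)] that(3) by simp
      then have "(u + lc_monom r' e) - (u + lc_monom r e) < lc_monom 1 (e + 1)"
        by (rule short[OF f[OF that(1)]])
      ultimately show False by simp
    qed
    have "inj_on f {0<..<c}"
    proof (rule inj_onI)
      fix r r'
      assume "r \<in> {0<..<c}" "r' \<in> {0<..<c}" "f r = f r'"
      then show "r = r'" using eq[of r r'] eq[of r' r] by (cases "r \<le> r'") auto
    qed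
    then have "countable {0<..<c}" by (rule countableI)
    then show False using uncountable_open_interval[of 0 c] \<open>0 < c\<close> by simp
  qed
  then show thesis using that by auto
qed

lemma diff_le_lc_len: "lc_interval_or_empty J \<Longrightarrow> x \<in> J \<Longrightarrow> y \<in> J \<Longrightarrow> y - x \<le> lc_len J"
  using lc_lower_upper_bounds lc_len_eq_upper_minus_lower by (simp add: diff_mono)

lemma lc_gap_not_covered:
  fixes N :: nat
  assumes iv: "\<And>m. lc_interval_or_empty (J m)" and c0: "0 < c"
    and short: "\<And>m. N \<le> m \<Longrightarrow> lc_len (J m) < lc_monom 1 (e + 1)"
    and gap: "\<forall>m\<in>{..<N}. \<forall>x. u < x \<and> x < u + lc_monom c e \<longrightarrow>
      \<not> (lc_lower (J m) \<le> x \<and> x \<le> lc_upper (J m))"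
  obtains x where "u < x" "x < u + lc_monom c e" "\<And>m. x \<notin> J m"
proof -
  have "y - x < lc_monom 1 (e + 1)" if "x \<in> J (N + m)" "y \<in> J (N + m)" for m x y
    using diff_le_lc_len[OF iv that] short[of "N + m"] by simp
  then obtain r where r: "0 < r" "r < c" "\<And>m. u + lc_monom r e \<notin> J (N + m)"
    using short_sets_miss_monom_point[OF c0, of "\<lambda>m. J (N + m)" e u] by blast
  have in_gap: "u < u + lc_monom r e" "u + lc_monom r e < u + lc_monom c e"
    using r lc_monom_pos lc_monom_strict_mono by simp_all
  have "u + lc_monom r e \<notin> J m" for m
  proof (cases "m < N")
    case True
    then show ?thesis using gap in_gap lc_lower_upper_bounds[OF iv] by blast
  next
    case False
    then show ?thesis using r(3)[of "m - N"] by simp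
  qed
  with in_gap show thesis by (rule that)
qed

lemma lc_len_cover_open_interval_ge:
  assumes ab: "al < be" and cov: "\<And>x. al < x \<Longrightarrow> x < be \<Longrightarrow> \<exists>m. x \<in> J m"
    and iv: "\<And>m. lc_interval_or_empty (J m)" and sJ: "lc_sums (\<lambda>m. lc_len (J m)) sJ"
  shows "\<exists>s. lc_sums (\<lambda>m. lc_len (J m \<inter> {x. al < x \<and> x < be})) s \<and> be - al \<le> s"
proof -
  let ?c = "\<lambda>m. lc_len (J m \<inter> {x. al < x \<and> x < be})"
  obtain s where s: "lc_sums ?c s"
    using lc_sums_comparison[OF _ _ sJ, of ?c] lc_len_Int_open_le[OF iv]
      lc_len_Int_open_nonneg[OF iv]
    by blast
  have "be - al \<le> s"
  proof (rule ccontr)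
    assume "\<not> be - al \<le> s"
    then have "0 < be - al - s" by simp
    then obtain e where e: "coeff (be - al - s) e > 0" "lc_vanishes_below e (be - al - s)"
      using lc_pos_imp_leading by blast
    define p where "p = coeff (be - al - s) e"
    text \<open>Only finitely many of the intervals are not infinitely smaller than \<open>d\<^sup>e\<close>.\<close>
    obtain N where N: "\<forall>m\<ge>N. \<bar>lc_len (J m)\<bar> < lc_monom 1 (e + 1)"
      using lc_sums_term_small[OF sJ lc_monom_pos[of 1 "e + 1"]] by auto
    define c where "c = p / 2 ^ (N + 1)"
    have c0: "0 < c" using e(1) unfolding c_def p_def by simp
    have "lc_monom (2 ^ card {..<N} * c) e = lc_monom (p / 2) e"
      unfolding c_def by (simp add: field_simps)
    also have "\<dots> < be - al - s"
      using lc_monom_less_leading[of "p / 2" "be - al - s" e] e unfolding p_def by simp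
    finally have gap_width: "lc_monom (2 ^ card {..<N} * c) e < be - al - s" .
    have "(\<Sum>m\<in>{..<N}. ?c m) \<le> s"
      using lc_psum_le_sums[OF lc_len_Int_open_nonneg[OF iv] s, of N] by (simp add: lc_psum_eq_sum)
    then have "lc_monom (2 ^ card {..<N} * c) e + (\<Sum>m\<in>{..<N}. ?c m)
        \<le> lc_monom (2 ^ card {..<N} * c) e + s"
      by (rule add_left_mono)
    also have "\<dots> \<le> be - al"
      using gap_width by (simp add: less_diff_eq less_imp_le)
    finally have "lc_monom (2 ^ card {..<N} * c) e + (\<Sum>m\<in>{..<N}. ?c m) \<le> be - al" .
    then obtain u where u: "al \<le> u" "u + lc_monom c e \<le> be"
      "\<forall>m\<in>{..<N}. \<forall>x. u < x \<and> x < u + lc_monom c e \<longrightarrow> \<not> (lc_lower (J m) \<le> x \<and> x \<le> lc_upper (J m))"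
      using finite_cover_leaves_gap[of "{..<N}" "\<lambda>m. lc_lower (J m)" "\<lambda>m. lc_upper (J m)" al be c e]
        lc_lower_le_upper[OF iv] less_imp_le[OF ab] c0 lc_len_Int_open[OF iv] by auto
    have short: "lc_len (J m) < lc_monom 1 (e + 1)" if "N \<le> m" for m
      using N that lc_len_nonneg[OF iv] by simp
    obtain x where x: "u < x" "x < u + lc_monom c e" "\<And>m. x \<notin> J m"
      using lc_gap_not_covered[OF iv c0 short u(3)] by blast
    have "al < x" using u(1) x(1) by (rule le_less_trans)
    moreover have "x < be" using x(2) u(2) by (rule less_le_trans)
    ultimately show False using cov x(3) by blast
  qed
  then show ?thesis using s by blast
qed

lemma lc_between_endpoints_subset:
  assumes "lc_interval_or_empty J"
  shows "{x. lc_lower J < x \<and> x < lc_upper J} \<subseteq> J"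
proof (cases "J = {}")
  case True
  then have "lc_lower J = lc_upper J" using lc_len_eq_upper_minus_lower[OF assms] by simp
  then show ?thesis by auto
qed (use lc_mem_if_between_endpoints[OF assms] in blast)

lemma lc_len_le_cover_sums:
  assumes I: "lc_interval_or_empty I" and iv: "\<And>m. lc_interval_or_empty (J m)"
    and sJ: "lc_sums (\<lambda>m. lc_len (J m)) sJ" and cov: "I \<subseteq> (\<Union>m. J m)"
  obtains s where "lc_sums (\<lambda>m. lc_len (J m \<inter> {x. lc_lower I < x \<and> x < lc_upper I})) s"
    "lc_len I \<le> s"
proof (cases "I = {}")
  case True
  then have "J m \<inter> {x. lc_lower I < x \<and> x < lc_upper I} = {}" for m
    using lc_between_endpoints_subset[OF I] by blast
  then show thesis using that[of 0] lc_sums_zero True by simp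
next
  case False
  have "\<exists>m. x \<in> J m" if "lc_lower I < x" "x < lc_upper I" for x
    using lc_mem_if_between_endpoints[OF I False that] cov by blast
  then obtain s where "lc_sums (\<lambda>m. lc_len (J m \<inter> {x. lc_lower I < x \<and> x < lc_upper I})) s"
    "lc_upper I - lc_lower I \<le> s"
    using lc_len_cover_open_interval_ge[OF lc_lower_less_upper[OF I False] _ iv sJ] by blast
  then show thesis using that lc_len_eq_upper_minus_lower[OF I] by simp
qed

lemma lc_sums_le_if_cover:
  assumes ivI: "\<And>n. lc_interval_or_empty (I n)" and dI: "\<And>m n. m \<noteq> n \<Longrightarrow> I m \<inter> I n = {}"
    and sI: "lc_sums (\<lambda>n. lc_len (I n)) sI"
    and ivJ: "\<And>m. lc_interval_or_empty (J m)" and sJ: "lc_sums (\<lambda>m. lc_len (J m)) sJ"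
    and sub: "(\<Union>n. I n) \<subseteq> (\<Union>m. J m)"
  shows "sI \<le> sJ"
proof -
  define Op where "Op n = {x. lc_lower (I n) < x \<and> x < lc_upper (I n)}" for n
  have "\<exists>s. lc_sums (\<lambda>m. lc_len (J m \<inter> Op n)) s \<and> lc_len (I n) \<le> s" for n
  proof -
    have "I n \<subseteq> (\<Union>m. J m)" using sub by blast
    then obtain s where "lc_sums (\<lambda>m. lc_len (J m \<inter> Op n)) s" "lc_len (I n) \<le> s"
      unfolding Op_def by (rule lc_len_le_cover_sums[OF ivI ivJ sJ])
    then show ?thesis by blast
  qed
  then obtain sf where sf: "\<And>n. lc_sums (\<lambda>m. lc_len (J m \<inter> Op n)) (sf n)" "\<And>n. lc_len (I n) \<le> sf n"
    by metis
  have disjoint: "(J m \<inter> Op i) \<inter> (J m \<inter> Op j) = {}" if "i \<noteq> j" for i j m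
    using lc_between_endpoints_subset[OF ivI, of i] lc_between_endpoints_subset[OF ivI, of j]
      dI[OF that] unfolding Op_def by blast
  have "lc_psum (\<lambda>n. lc_len (I n)) N \<le> sJ" for N
  proof -
    have "(\<Sum>n<N. lc_len (J m \<inter> Op n)) \<le> lc_len (J m)" for m
    proof (rule sum_lc_len_disjoint_le)
      show "\<forall>i\<in>{..<N}. lc_interval_or_empty (J m \<inter> Op i) \<and> J m \<inter> Op i \<subseteq> J m"
        unfolding Op_def using lc_interval_or_empty_Int_open[OF ivJ] by blast
    qed (use ivJ disjoint in auto)
    moreover have "lc_sums (\<lambda>m. \<Sum>n<N. lc_len (J m \<inter> Op n)) (\<Sum>n<N. sf n)"
      by (rule lc_sums_sum) (rule sf(1))
    ultimately have "(\<Sum>n<N. sf n) \<le> sJ"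
      by (rule lc_sums_le[OF _ _ sJ])
    moreover have "lc_psum (\<lambda>n. lc_len (I n)) N \<le> (\<Sum>n<N. sf n)"
      unfolding lc_psum_eq_sum using sf(2) by (rule sum_mono)
    ultimately show ?thesis by simp
  qed
  then show ?thesis
    by (intro lc_tendsto_le[OF sI[unfolded lc_sums_def] lc_tendsto_const[of sJ], of 0]) simp
qed

section \<open>Inner and outer sums\<close>

lemma inner_sums_le_outer_sums:
  assumes "x \<in> inner_sums A" "y \<in> outer_sums A" shows "x \<le> y"
proof -
  obtain I where I: "lc_ivl_family I" "(\<Union>n. I n) \<subseteq> A" "lc_sums (\<lambda>n. lc_len (I n)) x"
    using assms(1) unfolding inner_sums_def by blast
  obtain J where J: "lc_ivl_family J" "A \<subseteq> (\<Union>n. J n)" "lc_sums (\<lambda>n. lc_len (J n)) y"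
    using assms(2) unfolding outer_sums_def by blast
  show ?thesis
  proof (rule lc_sums_le_if_cover[OF lc_ivl_family_member[OF I(1)] _ I(3)
        lc_ivl_family_member[OF J(1)] J(3)])
    show "\<And>m n. m \<noteq> n \<Longrightarrow> I m \<inter> I n = {}" using I(1) unfolding lc_ivl_family_def by blast
    show "(\<Union>n. I n) \<subseteq> (\<Union>n. J n)" using I(2) J(2) by blast
  qed
qed

lemma S_measure_eqI:
  assumes "lc_is_sup (inner_sums A) m" "lc_is_inf (outer_sums A) m"
  shows "S_measure A = m"
  unfolding S_measure_def
proof (rule the_equality)
  show "lc_is_sup (inner_sums A) m \<and> lc_is_inf (outer_sums A) m" using assms by blast
next
  fix m' assume "lc_is_sup (inner_sums A) m' \<and> lc_is_inf (outer_sums A) m'"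
  hence "m' \<le> m" "m \<le> m'" using assms(1) unfolding lc_is_sup_def by blast+
  thus "m' = m" by simp
qed

lemma lc_sup_eq_inf:
  fixes X Y :: "lc set"
  assumes le: "\<And>x y. x \<in> X \<Longrightarrow> y \<in> Y \<Longrightarrow> x \<le> y"
    and close: "\<And>\<epsilon>. 0 < \<epsilon> \<Longrightarrow> \<exists>x\<in>X. \<exists>y\<in>Y. y - x \<le> \<epsilon>"
  obtains m where "lc_is_sup X m" "lc_is_inf Y m"
proof -
  have "\<forall>k::nat. \<exists>x y. x \<in> X \<and> y \<in> Y \<and> y - x \<le> lc_monom 1 (of_nat k)"
  proof
    fix k :: nat
    show "\<exists>x y. x \<in> X \<and> y \<in> Y \<and> y - x \<le> lc_monom 1 (of_nat k)"
      using close[OF lc_monom_pos[of 1 "of_nat k", OF zero_less_one]] by blast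
  qed
  then obtain x y where xy: "\<And>k. x k \<in> X" "\<And>k. y k \<in> Y" "\<And>k. y k - x k \<le> lc_monom 1 (of_nat k)"
    by metis
  have "lc_cauchy x"
    using lc_cauchy_if_bracketed[of x y] le[OF xy(1,2)] xy(3) by blast
  then obtain m where x: "lc_tendsto x m" using lc_cauchy_imp_tendsto by blast
  have "lc_tendsto (\<lambda>k. x k + lc_monom 1 (of_nat k)) m"
    using lc_tendsto_add[OF x lc_tendsto_monom] by simp
  moreover have "x k \<le> y k" "y k \<le> x k + lc_monom 1 (of_nat k)" for k
    using le[OF xy(1,2)] xy(3)[of k] by (simp_all add: diff_le_eq add.commute)
  ultimately have y: "lc_tendsto y m" using lc_tendsto_squeeze[OF x] by blast
  have ge: "z \<le> m" if "\<And>k. z \<le> y k" for z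
    using lc_tendsto_le[OF lc_tendsto_const[of z] y, of 0] that by simp
  have le': "m \<le> z" if "\<And>k. x k \<le> z" for z
    using lc_tendsto_le[OF x lc_tendsto_const[of z], of 0] that by simp
  show thesis
  proof
    show "lc_is_sup X m"
      unfolding lc_is_sup_def
    proof (intro conjI ballI allI impI)
      show "u \<le> m" if "u \<in> X" for u using ge[OF le[OF that xy(2)]] .
      show "m \<le> w" if "\<forall>u\<in>X. u \<le> w" for w using le' that xy(1) by blast
    qed
    show "lc_is_inf Y m"
      unfolding lc_is_inf_def
    proof (intro conjI ballI allI impI)
      show "m \<le> v" if "v \<in> Y" for v using le'[OF le[OF xy(1) that]] .
      show "w \<le> m" if "\<forall>v\<in>Y. w \<le> v" for w using ge that xy(2) by blast
    qed
  qed
qed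

lemma S_measure_sup_inf:
  assumes "S_measurable A"
  shows "lc_is_sup (inner_sums A) (S_measure A)" "lc_is_inf (outer_sums A) (S_measure A)"
proof -
  have close: "\<exists>x\<in>inner_sums A. \<exists>y\<in>outer_sums A. y - x \<le> \<epsilon>" if "0 < \<epsilon>" for \<epsilon>
    using assms that unfolding S_measurable_def by blast
  obtain m where m: "lc_is_sup (inner_sums A) m" "lc_is_inf (outer_sums A) m"
    using lc_sup_eq_inf[OF inner_sums_le_outer_sums[of _ A] close] by blast
  then show "lc_is_sup (inner_sums A) (S_measure A)" "lc_is_inf (outer_sums A) (S_measure A)"
    using S_measure_eqI[OF m] by simp_all
qed

lemma S_measure_approx:
  assumes "S_measurable A" "0 < \<epsilon>"
  shows "\<exists>x\<in>inner_sums A. S_measure A - \<epsilon> \<le> x" "\<exists>y\<in>outer_sums A. y \<le> S_measure A + \<epsilon>"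
proof -
  obtain x y where xy: "x \<in> inner_sums A" "y \<in> outer_sums A" "y - x \<le> \<epsilon>"
    using assms unfolding S_measurable_def by blast
  have "S_measure A \<le> y" "x \<le> S_measure A"
    using S_measure_sup_inf[OF assms(1)] xy unfolding lc_is_sup_def lc_is_inf_def by blast+
  show "\<exists>x\<in>inner_sums A. S_measure A - \<epsilon> \<le> x"
  proof (intro bexI[OF _ xy(1)])
    have "S_measure A - \<epsilon> \<le> y - \<epsilon>" using \<open>S_measure A \<le> y\<close> by (rule diff_right_mono)
    also have "\<dots> \<le> x" using xy(3) by (simp add: diff_le_eq add.commute)
    finally show "S_measure A - \<epsilon> \<le> x" .
  qed
  show "\<exists>y\<in>outer_sums A. y \<le> S_measure A + \<epsilon>"
  proof (intro bexI[OF _ xy(2)])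
    have "y \<le> x + \<epsilon>" using xy(3) by (simp add: diff_le_eq add.commute)
    also have "\<dots> \<le> S_measure A + \<epsilon>" using \<open>x \<le> S_measure A\<close> by (rule add_right_mono)
    finally show "y \<le> S_measure A + \<epsilon>" .
  qed
qed

lemma S_measure_zeroI:
  assumes small: "\<And>\<epsilon>. 0 < \<epsilon> \<Longrightarrow> \<exists>y\<in>outer_sums S. y \<le> \<epsilon>"
  shows "S_measurable S" "S_measure S = 0"
proof -
  have "lc_ivl_family (\<lambda>n. {})" "lc_sums (\<lambda>n. lc_len {}) 0"
    using lc_sums_zero by (simp_all add: lc_ivl_family_def)
  then have zero_inner: "0 \<in> inner_sums S"
    unfolding inner_sums_def by blast
  show measurable: "S_measurable S"
    unfolding S_measurable_def
  proof (intro allI impI)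
    fix \<epsilon> :: lc
    assume "0 < \<epsilon>"
    then obtain y where "y \<in> outer_sums S" "y \<le> \<epsilon>" using small by blast
    then show "\<exists>sI\<in>inner_sums S. \<exists>sJ\<in>outer_sums S. sJ - sI \<le> \<epsilon>"
      using zero_inner by (intro bexI[of _ 0] bexI[of _ y]) simp_all
  qed
  have "S_measure S \<le> 0"
  proof (rule dense_ge)
    fix \<epsilon> :: lc
    assume "0 < \<epsilon>"
    then obtain y where "y \<in> outer_sums S" "y \<le> \<epsilon>" using small by blast
    with S_measure_sup_inf(2)[OF measurable] show "S_measure S \<le> \<epsilon>"
      unfolding lc_is_inf_def by (blast intro: order.trans)
  qed
  moreover have "0 \<le> S_measure S"
    using S_measure_sup_inf(1)[OF measurable] zero_inner unfolding lc_is_sup_def by blast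
  ultimately show "S_measure S = 0" by simp
qed

section \<open>Cutting intervals out of a family\<close>

definition cut_family :: "(nat \<Rightarrow> lc set) \<Rightarrow> lc \<Rightarrow> lc \<Rightarrow> nat \<Rightarrow> lc set" where
  "cut_family F c d n = (if even n then F (n div 2) \<inter> {x. x < c} else F (n div 2) \<inter> {x. d < x})"

lemma lc_len_Int_outside:
  assumes "lc_interval_or_empty J" "c \<le> d"
  shows "lc_len (J \<inter> {x. x < c}) + lc_len (J \<inter> {x. d < x})
      = lc_len J - lc_len (J \<inter> {x. c < x \<and> x < d})"
proof -
  have h: "lc_upper J - lc_lower J = max 0 (min (lc_upper J) c - lc_lower J)
      + overlap_len (lc_lower J) (lc_upper J) c d + max 0 (lc_upper J - max (lc_lower J) d)"
    by (rule overlap_len_split3[OF lc_lower_le_upper[OF assms(1)] assms(2)])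
  show ?thesis unfolding lc_len_Int_lessThan[OF assms(1)] lc_len_Int_greaterThan[OF assms(1)]
    lc_len_Int_open[OF assms(1)] lc_len_eq_upper_minus_lower[OF assms(1)] h
    by (simp add: algebra_simps)
qed

lemma lc_ivl_family_cut_family:
  assumes F: "lc_ivl_family F" and cd: "c \<le> d"
  shows "lc_ivl_family (cut_family F c d)"
proof -
  have iv: "lc_interval_or_empty (F n)" for n using lc_ivl_family_member[OF F] .
  have dF: "F m \<inter> F n = {}" if "m \<noteq> n" for m n using F that unfolding lc_ivl_family_def by blast
  have sub: "cut_family F c d n \<subseteq> F (n div 2)" for n unfolding cut_family_def by auto
  have "lc_interval_or_empty (cut_family F c d n)" for n
    unfolding cut_family_def
    using lc_interval_or_empty_Int_lessThan[OF iv] lc_interval_or_empty_Int_greaterThan[OF iv]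
    by simp
  moreover have "cut_family F c d m \<inter> cut_family F c d n = {}" if mn: "m \<noteq> n" for m n
  proof (cases "m div 2 = n div 2")
    case False
    then show ?thesis using sub[of m] sub[of n] dF[OF False] by blast
  next
    case True
    then have "even m \<noteq> even n" using mn by (metis dvd_mult_div_cancel odd_two_times_div_two_succ)
    then show ?thesis unfolding cut_family_def using cd by (auto dest: less_le_trans less_trans)
  qed
  ultimately show ?thesis unfolding lc_ivl_family_def lc_interval_or_empty_def by blast
qed

lemma lc_sums_cut_family:
  assumes F: "lc_ivl_family F" and cd: "c \<le> d" and s: "lc_sums (\<lambda>n. lc_len (F n)) s"
    and t: "lc_sums (\<lambda>n. lc_len (F n \<inter> {x. c < x \<and> x < d})) t"
  shows "lc_sums (\<lambda>n. lc_len (cut_family F c d n)) (s - t)"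
proof -
  have iv: "lc_interval_or_empty (F n)" for n using lc_ivl_family_member[OF F] .
  have "lc_sums (\<lambda>n. lc_len (F n) - lc_len (F n \<inter> {x. c < x \<and> x < d})) (s - t)"
    by (rule lc_sums_diff[OF s t])
  then have "lc_sums (\<lambda>n. lc_len (F n \<inter> {x. x < c}) + lc_len (F n \<inter> {x. d < x})) (s - t)"
    unfolding lc_len_Int_outside[OF iv cd] .
  then have "lc_sums (\<lambda>n. if even n then lc_len (F (n div 2) \<inter> {x. x < c})
      else lc_len (F (n div 2) \<inter> {x. d < x})) (s - t)"
    using lc_len_nonneg lc_interval_or_empty_Int_lessThan[OF iv]
      lc_interval_or_empty_Int_greaterThan[OF iv] by (intro lc_sums_interleave) auto
  then show ?thesis unfolding cut_family_def by (simp add: if_distrib)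
qed

lemma mem_Union_cut_family:
  "x \<in> (\<Union>n. cut_family F c d n) \<longleftrightarrow> x \<in> (\<Union>n. F n) \<and> (x < c \<or> d < x)"
proof
  assume "x \<in> (\<Union>n. cut_family F c d n)"
  then show "x \<in> (\<Union>n. F n) \<and> (x < c \<or> d < x)"
    unfolding cut_family_def by (auto split: if_splits)
next
  assume h: "x \<in> (\<Union>n. F n) \<and> (x < c \<or> d < x)"
  then obtain n where n: "x \<in> F n" by blast
  have "x \<in> cut_family F c d (if x < c then 2 * n else 2 * n + 1)"
    unfolding cut_family_def using n h by auto
  then show "x \<in> (\<Union>n. cut_family F c d n)" by blast
qed

lemma lc_open_interval:
  assumes "al \<le> be"
  shows "lc_interval_or_empty {x. al < x \<and> x < be}" "lc_len {x. al < x \<and> x < be} = be - al"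
proof -
  have "lc_interval_or_empty {x. al < x \<and> x < be} \<and> lc_len {x. al < x \<and> x < be} = be - al"
  proof (cases "al = be")
    case True
    hence E: "{x. al < x \<and> x < be} = {}" by (auto dest: less_trans)
    show ?thesis unfolding E using True by (simp add: lc_interval_or_empty_def)
  next
    case False
    hence lt: "al < be" using assms by simp
    have "{x. al < x \<and> x < be} = lc_ivl al be False False" unfolding lc_ivl_def by simp
    thus ?thesis using lc_interval_or_empty_ivl[OF lt] lc_len_ivl[OF lt] by simp
  qed
  thus "lc_interval_or_empty {x. al < x \<and> x < be}" "lc_len {x. al < x \<and> x < be} = be - al"
    by simp_all
qed

lemma inner_sums_Diff:
  assumes I: "lc_ivl_family I" and sub: "(\<Union>n. I n) \<subseteq> X" and s: "lc_sums (\<lambda>n. lc_len (I n)) s"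
    and K: "lc_interval_or_empty K"
  shows "\<exists>I' s'. lc_ivl_family I' \<and> (\<Union>n. I' n) \<subseteq> X - K \<and> lc_sums (\<lambda>n. lc_len (I' n)) s'
      \<and> s - lc_len K \<le> s'"
proof -
  define al where "al = lc_lower K"
  define be where "be = lc_upper K"
  have ab: "al \<le> be" unfolding al_def be_def using lc_lower_le_upper[OF K] .
  let ?O = "{x. al < x \<and> x < be}"
  have iv: "lc_interval_or_empty (I n)" for n using lc_ivl_family_member[OF I] .
  obtain t where t: "lc_sums (\<lambda>n. lc_len (I n \<inter> ?O)) t"
    using lc_sums_comparison[OF _ _ s, of "\<lambda>n. lc_len (I n \<inter> ?O)"] lc_len_Int_open_le[OF iv]
      lc_len_Int_open_nonneg[OF iv] by blast
  have pb: "lc_psum (\<lambda>n. lc_len (I n \<inter> ?O)) N \<le> be - al" for N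
  proof -
    have "lc_psum (\<lambda>n. lc_len (I n \<inter> ?O)) N = (\<Sum>n\<in>{..<N}. lc_len (I n \<inter> ?O))"
      by (simp add: lc_psum_eq_sum)
    also have "\<dots> \<le> lc_len ?O"
    proof (rule sum_lc_len_disjoint_le)
      show "finite {..<N}" by simp
      show "lc_interval_or_empty ?O" using lc_open_interval[OF ab] by simp
      show "\<forall>i\<in>{..<N}. lc_interval_or_empty (I i \<inter> ?O) \<and> I i \<inter> ?O \<subseteq> ?O"
        using lc_interval_or_empty_Int_open[OF iv] by blast
      show "\<forall>i\<in>{..<N}. \<forall>j\<in>{..<N}. i \<noteq> j \<longrightarrow> I i \<inter> ?O \<inter> (I j \<inter> ?O) = {}"
        using I unfolding lc_ivl_family_def by blast
    qed
    also have "\<dots> = be - al" using lc_open_interval[OF ab] by simp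
    finally show ?thesis .
  qed
  have tb: "t \<le> be - al"
    by (rule lc_tendsto_le[OF t[unfolded lc_sums_def] lc_tendsto_const, of 0]) (simp add: pb)
  show ?thesis
  proof (intro exI conjI)
    show "lc_ivl_family (cut_family I al be)" using lc_ivl_family_cut_family[OF I ab] .
    show "lc_sums (\<lambda>n. lc_len (cut_family I al be n)) (s - t)"
      using lc_sums_cut_family[OF I ab s t] .
    show "s - lc_len K \<le> s - t" using tb lc_len_eq_upper_minus_lower[OF K] unfolding al_def be_def
      by (simp add: diff_left_mono)
    show "(\<Union>n. cut_family I al be n) \<subseteq> X - K"
    proof
      fix x assume "x \<in> (\<Union>n. cut_family I al be n)"
      hence h: "x \<in> (\<Union>n. I n)" "x < al \<or> be < x"
        using mem_Union_cut_family[of x I al be] by simp_all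
      have "x \<notin> K" using h(2) lc_lower_upper_bounds[OF K, of x] unfolding al_def be_def
        by (auto simp: not_le[symmetric])
      thus "x \<in> X - K" using h(1) sub by blast
    qed
  qed
qed

lemma lc_interval_shrink:
  fixes al be \<eta> :: lc
  assumes "al < be" "0 < \<eta>"
  obtains a' b' where "a' < b'" "al < a'" "b' < be" "(be - al) - \<eta> \<le> b' - a'"
proof -
  define m where "m = min \<eta> (be - al)"
  define h where "h = lc_half (lc_half m)"
  have m: "0 < m" "m \<le> \<eta>" "m \<le> be - al" using assms unfolding m_def by auto
  have "h + h = lc_half m" "lc_half m < m" "0 < h"
    using lc_half_less[OF m(1)] lc_half_pos[OF lc_half_pos[OF m(1)]] unfolding h_def by simp_all
  then have "0 < h" "h + h \<le> \<eta>" "h + h < be - al"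
    using m by (auto simp: less_imp_le)
  then show ?thesis
    by (intro that[of "al + h" "be - h"]) (auto simp: algebra_simps)
qed

lemma outer_sums_Diff:
  assumes J: "lc_ivl_family J" and cov: "X \<subseteq> (\<Union>n. J n)" and s: "lc_sums (\<lambda>n. lc_len (J n)) s"
    and K: "lc_interval_or_empty K" and KX: "K \<subseteq> X" and eta: "0 < \<eta>"
  shows "\<exists>J' s'. lc_ivl_family J' \<and> X - K \<subseteq> (\<Union>n. J' n) \<and> lc_sums (\<lambda>n. lc_len (J' n)) s'
      \<and> s' \<le> s - lc_len K + \<eta>"
proof (cases "K = {}")
  case True
  thus ?thesis using J cov s eta by (intro exI[of _ J] exI[of _ s]) (auto simp: less_imp_le)
next
  case False
  define al where "al = lc_lower K"
  define be where "be = lc_upper K"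
  have ab: "al < be" unfolding al_def be_def using lc_lower_less_upper[OF K False] .
  obtain a' b' where a'b': "a' < b'" and ala': "al < a'" and b'be: "b' < be"
    and shrink: "(be - al) - \<eta> \<le> b' - a'"
    using lc_interval_shrink[OF ab eta] by blast
  have iv: "lc_interval_or_empty (J n)" for n using lc_ivl_family_member[OF J] .
  have "\<exists>m. x \<in> J m" if "a' < x" "x < b'" for x
  proof -
    have "al < x" "x < be" using that ala' b'be by (auto dest: less_trans)
    then show ?thesis
      using lc_mem_if_between_endpoints[OF K False] KX cov unfolding al_def be_def by blast
  qed
  then obtain s0 where s0: "lc_sums (\<lambda>m. lc_len (J m \<inter> {x. a' < x \<and> x < b'})) s0" "b' - a' \<le> s0"
    using lc_len_cover_open_interval_ge[OF a'b' _ iv s] by blast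
  show ?thesis
  proof (intro exI conjI)
    show "lc_ivl_family (cut_family J a' b')"
      using lc_ivl_family_cut_family[OF J less_imp_le[OF a'b']] .
    show "lc_sums (\<lambda>n. lc_len (cut_family J a' b' n)) (s - s0)"
      using lc_sums_cut_family[OF J less_imp_le[OF a'b'] s s0(1)] .
    have "s - s0 \<le> s - (b' - a')" using s0(2) by (rule diff_left_mono)
    also have "\<dots> \<le> s - lc_len K + \<eta>"
    proof -
      have "lc_len K - \<eta> \<le> b' - a'"
        using shrink lc_len_eq_upper_minus_lower[OF K] unfolding al_def be_def by simp
      then show ?thesis by (simp add: algebra_simps)
    qed
    finally show "s - s0 \<le> s - lc_len K + \<eta>" .
    show "X - K \<subseteq> (\<Union>n. cut_family J a' b' n)"
    proof
      fix x assume x: "x \<in> X - K"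
      have "\<not> (al < x \<and> x < be)" using x lc_mem_if_between_endpoints[OF K False]
        unfolding al_def be_def by blast
      then consider "x \<le> al" | "be \<le> x" by (auto simp: not_less)
      then have "x < a' \<or> b' < x"
        by cases (use ala' b'be in \<open>auto intro: le_less_trans less_le_trans\<close>)
      moreover have "x \<in> (\<Union>n. J n)" using x cov by blast
      ultimately show "x \<in> (\<Union>n. cut_family J a' b' n)"
        using mem_Union_cut_family[of x J a' b'] by simp
    qed
  qed
qed

definition sum_lc_len :: "lc set list \<Rightarrow> lc" where "sum_lc_len Ks = sum_list (map lc_len Ks)"

fun disjoint_list :: "lc set list \<Rightarrow> bool" where
  "disjoint_list [] = True"
| "disjoint_list (K # Ks) = ((\<forall>K'\<in>set Ks. K \<inter> K' = {}) \<and> disjoint_list Ks)"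

lemma sum_lc_len_simps[simp]: "sum_lc_len [] = 0" "sum_lc_len (K # Ks) = lc_len K + sum_lc_len Ks"
  unfolding sum_lc_len_def by simp_all

lemma disjoint_list_map: "distinct xs \<Longrightarrow> (\<And>m n. m \<noteq> n \<Longrightarrow> K m \<inter> K n = {}) \<Longrightarrow> disjoint_list (map K xs)"
proof (induction xs)
  case (Cons a xs)
  have "K a \<inter> K y = {}" if "y \<in> set xs" for y
  proof -
    have "a \<noteq> y" using Cons.prems(1) that by auto
    thus ?thesis by (rule Cons.prems(2))
  qed
  thus ?case using Cons by simp
qed simp

lemma sum_lc_len_map: "sum_lc_len (map K [0..<N]) = lc_psum (\<lambda>n. lc_len (K n)) N"
  unfolding sum_lc_len_def by (induction N) (auto simp: add.commute)

lemma disjoint_list_append: "disjoint_list (L @ Cs) \<longleftrightarrow> disjoint_list L \<and> disjoint_list Cs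
    \<and> (\<forall>X\<in>set L. \<forall>Y\<in>set Cs. X \<inter> Y = {})"
  by (induction L) auto

lemma disjoint_list_nth: "disjoint_list L \<Longrightarrow> i < j \<Longrightarrow> j < length L \<Longrightarrow> L ! i \<inter> L ! j = {}"
proof (induction L arbitrary: i j)
  case (Cons K L)
  show ?case
  proof (cases i)
    case 0
    hence "L ! (j - 1) \<in> set L" using Cons.prems by simp
    thus ?thesis using Cons.prems 0 by (cases j) auto
  next
    case (Suc i')
    then obtain j' where "j = Suc j'" using Cons.prems by (cases j) auto
    thus ?thesis using Cons Suc by simp
  qed
qed simp

lemma sum_lc_len_append: "sum_lc_len (L @ Cs) = sum_lc_len L + sum_lc_len Cs"
  unfolding sum_lc_len_def by simp

lemma inner_sums_Diff_list:
  assumes I: "lc_ivl_family I" "(\<Union>n. I n) \<subseteq> A" "lc_sums (\<lambda>n. lc_len (I n)) s"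
    and Ks: "\<forall>K\<in>set Ks. lc_interval_or_empty K"
  shows "\<exists>I' s'. lc_ivl_family I' \<and> (\<Union>n. I' n) \<subseteq> A - \<Union>(set Ks) \<and> lc_sums (\<lambda>n. lc_len (I' n)) s'
      \<and> s - sum_lc_len Ks \<le> s'"
  using Ks
proof (induction Ks)
  case Nil thus ?case using I by auto
next
  case (Cons K Ks)
  then obtain I1 s1 where I1: "lc_ivl_family I1" "(\<Union>n. I1 n) \<subseteq> A - \<Union>(set Ks)"
    "lc_sums (\<lambda>n. lc_len (I1 n)) s1"
    "s - sum_lc_len Ks \<le> s1" by auto
  obtain I2 s2 where I2: "lc_ivl_family I2" "(\<Union>n. I2 n) \<subseteq> (A - \<Union>(set Ks)) - K"
    "lc_sums (\<lambda>n. lc_len (I2 n)) s2"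
    "s1 - lc_len K \<le> s2"
    using inner_sums_Diff[OF I1(1-3), of K] Cons.prems by auto
  have "s - sum_lc_len (K # Ks) \<le> s1 - lc_len K" using I1(4) by (simp add: algebra_simps)
  also have "\<dots> \<le> s2" by (rule I2(4))
  finally have "s - sum_lc_len (K # Ks) \<le> s2" .
  moreover have "(\<Union>n. I2 n) \<subseteq> A - \<Union>(set (K # Ks))" using I2(2) by auto
  ultimately show ?case using I2(1,3) by blast
qed

lemma outer_sums_Diff_list:
  assumes J: "lc_ivl_family J" "A \<subseteq> (\<Union>n. J n)" "lc_sums (\<lambda>n. lc_len (J n)) s"
    and Ks: "\<forall>K\<in>set Ks. lc_interval_or_empty K \<and> K \<subseteq> A" "disjoint_list Ks"
  shows "\<forall>\<epsilon>>0. \<exists>J' s'. lc_ivl_family J' \<and> A - \<Union>(set Ks) \<subseteq> (\<Union>n. J' n)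
      \<and> lc_sums (\<lambda>n. lc_len (J' n)) s' \<and> s' \<le> s - sum_lc_len Ks + \<epsilon>"
  using Ks
proof (induction Ks)
  case Nil
  show ?case
  proof (intro allI impI)
    fix \<epsilon> :: lc assume "0 < \<epsilon>"
    thus "\<exists>J' s'. lc_ivl_family J' \<and> A - \<Union>(set []) \<subseteq> (\<Union>n. J' n) \<and> lc_sums (\<lambda>n. lc_len (J' n)) s'
        \<and> s' \<le> s - sum_lc_len [] + \<epsilon>"
      using J by (intro exI[of _ J] exI[of _ s]) (auto simp: less_imp_le)
  qed
next
  case (Cons K Ks)
  show ?case
  proof (intro allI impI)
    fix \<epsilon> :: lc assume e: "0 < \<epsilon>"
    have h: "0 < lc_half \<epsilon>" using lc_half_pos[OF e] .
    obtain J1 s1 where J1: "lc_ivl_family J1" "A - \<Union>(set Ks) \<subseteq> (\<Union>n. J1 n)"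
      "lc_sums (\<lambda>n. lc_len (J1 n)) s1"
      "s1 \<le> s - sum_lc_len Ks + lc_half \<epsilon>"
      using Cons.IH Cons.prems h by auto
    have KX: "K \<subseteq> A - \<Union>(set Ks)" using Cons.prems by auto
    have ivK: "lc_interval_or_empty K" using Cons.prems by simp
    obtain J2 s2 where J2: "lc_ivl_family J2" "(A - \<Union>(set Ks)) - K \<subseteq> (\<Union>n. J2 n)"
      "lc_sums (\<lambda>n. lc_len (J2 n)) s2"
      "s2 \<le> s1 - lc_len K + lc_half \<epsilon>"
      using outer_sums_Diff[OF J1(1-3) ivK KX h] by auto
    have "s2 \<le> s1 - lc_len K + lc_half \<epsilon>" by (rule J2(4))
    also have "\<dots> \<le> (s - sum_lc_len Ks + lc_half \<epsilon>) - lc_len K + lc_half \<epsilon>"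
      using J1(4) by (intro add_right_mono diff_right_mono)
    also have "\<dots> = s - sum_lc_len (K # Ks) + (lc_half \<epsilon> + lc_half \<epsilon>)"
      by (simp add: algebra_simps)
    also have "\<dots> = s - sum_lc_len (K # Ks) + \<epsilon>" by simp
    finally have "s2 \<le> s - sum_lc_len (K # Ks) + \<epsilon>" .
    moreover have "A - \<Union>(set (K # Ks)) \<subseteq> (\<Union>n. J2 n)" using J2(2) by auto
    ultimately show "\<exists>J' s'. lc_ivl_family J' \<and> A - \<Union>(set (K # Ks)) \<subseteq> (\<Union>n. J' n)
        \<and> lc_sums (\<lambda>n. lc_len (J' n)) s' \<and> s' \<le> s - sum_lc_len (K # Ks) + \<epsilon>"
      using J2(1,3) by blast
  qed
qed

section \<open>The greedy decomposition\<close>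

definition disjoint_intervals_in :: "lc set \<Rightarrow> lc set list \<Rightarrow> bool" where
  "disjoint_intervals_in A L \<longleftrightarrow>
     (\<forall>X\<in>set L. lc_interval_or_empty X \<and> X \<subseteq> A) \<and> disjoint_list L"

lemma extend_disjoint_intervals:
  assumes A: "S_measurable A" and L: "disjoint_intervals_in A L" and e: "0 < \<epsilon>"
  shows "\<exists>Cs. Cs \<noteq> [] \<and> disjoint_intervals_in A (L @ Cs) \<and>
    S_measure A - \<epsilon> \<le> sum_lc_len (L @ Cs)"
proof -
  let ?m = "S_measure A"
  have h: "0 < lc_half \<epsilon>" using lc_half_pos[OF e] .
  obtain x where x: "x \<in> inner_sums A" "?m - lc_half \<epsilon> \<le> x"
    using S_measure_approx(1)[OF A h] by blast
  obtain I where I: "lc_ivl_family I" "(\<Union>n. I n) \<subseteq> A" "lc_sums (\<lambda>n. lc_len (I n)) x"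
    using x(1) unfolding inner_sums_def by blast
  obtain I' s' where I': "lc_ivl_family I'" "(\<Union>n. I' n) \<subseteq> A - \<Union>(set L)"
    "lc_sums (\<lambda>n. lc_len (I' n)) s'" "x - sum_lc_len L \<le> s'"
    using inner_sums_Diff_list[OF I, of L] L unfolding disjoint_intervals_in_def by blast
  obtain P where "\<bar>lc_psum (\<lambda>n. lc_len (I' n)) P - s'\<bar> < lc_half \<epsilon>"
    using I'(3) h unfolding lc_sums_def lc_tendsto_def by fastforce
  then have "s' - lc_half \<epsilon> < lc_psum (\<lambda>n. lc_len (I' n)) P"
    unfolding abs_less_iff_linordered by (simp add: algebra_simps)
  also have "\<dots> \<le> lc_psum (\<lambda>n. lc_len (I' n)) (Suc P)"
    using lc_len_nonneg[OF lc_ivl_family_member[OF I'(1)]] by simp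
  finally have P: "s' - lc_half \<epsilon> < lc_psum (\<lambda>n. lc_len (I' n)) (Suc P)" .
  let ?Cs = "map I' [0..<Suc P]"
  have disj: "I' m \<inter> I' n = {}" if "m \<noteq> n" for m n
    using I'(1) that unfolding lc_ivl_family_def by blast
  have "X \<inter> Y = {}" if "X \<in> set L" "Y \<in> set ?Cs" for X Y
    using that I'(2) by auto
  moreover have "I' n \<subseteq> A" for n using I'(2) by blast
  ultimately have "disjoint_intervals_in A (L @ ?Cs)"
    using L lc_ivl_family_member[OF I'(1)] disjoint_list_map[of "[0..<Suc P]" I'] disj
    unfolding disjoint_intervals_in_def disjoint_list_append by auto
  moreover have "?m - \<epsilon> \<le> sum_lc_len (L @ ?Cs)"
  proof -
    have "?m - \<epsilon> = (?m - lc_half \<epsilon>) - lc_half \<epsilon>" by (simp only: diff_diff_eq lc_half_add_self)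
    also have "\<dots> \<le> (x - sum_lc_len L) + sum_lc_len L - lc_half \<epsilon>" using x(2) by simp
    also have "\<dots> \<le> s' + sum_lc_len L - lc_half \<epsilon>" using I'(4) by (simp add: diff_le_eq)
    also have "\<dots> \<le> sum_lc_len L + lc_psum (\<lambda>n. lc_len (I' n)) (Suc P)"
      using P by (simp add: algebra_simps)
    also have "\<dots> = sum_lc_len (L @ ?Cs)" by (simp add: sum_lc_len_append sum_lc_len_map)
    finally show ?thesis .
  qed
  ultimately show ?thesis by (intro exI[of _ ?Cs]) simp
qed

definition next_intervals :: "lc set \<Rightarrow> lc set list \<Rightarrow> nat \<Rightarrow> lc set list" where
  "next_intervals A L k = (SOME Cs. Cs \<noteq> [] \<and> disjoint_intervals_in A (L @ Cs) \<and>
      S_measure A - lc_monom 1 (of_nat k) \<le> sum_lc_len (L @ Cs))"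

primrec chosen_intervals :: "lc set \<Rightarrow> nat \<Rightarrow> lc set list" where
  "chosen_intervals A 0 = []"
| "chosen_intervals A (Suc k) = chosen_intervals A k @ next_intervals A (chosen_intervals A k) k"

text \<open>Every stage appends at least one interval, so the \<open>n\<close>-th interval is chosen by
  stage \<open>n + 1\<close>.\<close>

definition greedy_intervals :: "lc set \<Rightarrow> nat \<Rightarrow> lc set" where
  "greedy_intervals A n = chosen_intervals A (Suc n) ! n"

lemma next_intervals:
  assumes "S_measurable A" "disjoint_intervals_in A L"
  shows "next_intervals A L k \<noteq> []" "disjoint_intervals_in A (L @ next_intervals A L k)"
    "S_measure A - lc_monom 1 (of_nat k) \<le> sum_lc_len (L @ next_intervals A L k)"
proof -
  have "next_intervals A L k \<noteq> [] \<and> disjoint_intervals_in A (L @ next_intervals A L k) \<and>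
    S_measure A - lc_monom 1 (of_nat k) \<le> sum_lc_len (L @ next_intervals A L k)"
    unfolding next_intervals_def
    by (rule someI_ex[OF extend_disjoint_intervals[OF assms
          lc_monom_pos[of 1 "of_nat k", OF zero_less_one]]])
  then show "next_intervals A L k \<noteq> []" "disjoint_intervals_in A (L @ next_intervals A L k)"
    "S_measure A - lc_monom 1 (of_nat k) \<le> sum_lc_len (L @ next_intervals A L k)"
    by blast+
qed

lemma chosen_intervals_good:
  assumes "S_measurable A" shows "disjoint_intervals_in A (chosen_intervals A k)"
proof (induction k)
  case (Suc k)
  then show ?case using next_intervals(2)[OF assms Suc.IH] by simp
qed (simp add: disjoint_intervals_in_def)

lemma chosen_intervals_bound:
  assumes "S_measurable A"
  shows "S_measure A - lc_monom 1 (of_nat k) \<le> sum_lc_len (chosen_intervals A (Suc k))"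
  using next_intervals(3)[OF assms chosen_intervals_good[OF assms]] by simp

lemma length_chosen_intervals:
  assumes "S_measurable A" shows "k \<le> length (chosen_intervals A k)"
proof (induction k)
  case (Suc k)
  have "next_intervals A (chosen_intervals A k) k \<noteq> []"
    using next_intervals(1)[OF assms chosen_intervals_good[OF assms]] .
  then have "0 < length (next_intervals A (chosen_intervals A k) k)" by blast
  moreover have "length (chosen_intervals A (Suc k)) =
      length (chosen_intervals A k) + length (next_intervals A (chosen_intervals A k) k)"
    by simp
  ultimately show ?case using Suc.IH by linarith
qed simp

lemma chosen_intervals_prefix: "k \<le> k' \<Longrightarrow> \<exists>ys. chosen_intervals A k' = chosen_intervals A k @ ys"
proof (induction k' rule: dec_induct)
  case (step k')
  then obtain ys where "chosen_intervals A k' = chosen_intervals A k @ ys" by blast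
  then show ?case by simp
qed simp

lemma greedy_intervals_eq:
  assumes A: "S_measurable A" and n: "n < length (chosen_intervals A k)"
  shows "greedy_intervals A n = chosen_intervals A k ! n"
proof -
  have "n < length (chosen_intervals A (Suc n))"
    using length_chosen_intervals[OF A, of "Suc n"] by simp
  moreover obtain ys ys' where "chosen_intervals A (max k (Suc n)) = chosen_intervals A k @ ys"
    "chosen_intervals A (max k (Suc n)) = chosen_intervals A (Suc n) @ ys'"
    using chosen_intervals_prefix[of k "max k (Suc n)" A]
      chosen_intervals_prefix[of "Suc n" "max k (Suc n)" A]
    by auto
  ultimately show ?thesis
    unfolding greedy_intervals_def using n by (metis nth_append_left)
qed

lemma sum_lc_len_chosen:
  assumes "S_measurable A"
  shows "sum_lc_len (chosen_intervals A k)
      = lc_psum (\<lambda>n. lc_len (greedy_intervals A n)) (length (chosen_intervals A k))"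
proof -
  have "sum_lc_len (chosen_intervals A k)
      = (\<Sum>i = 0..<length (chosen_intervals A k). map lc_len (chosen_intervals A k) ! i)"
    unfolding sum_lc_len_def sum_list_sum_nth by simp
  also have "\<dots> = (\<Sum>i<length (chosen_intervals A k). lc_len (greedy_intervals A i))"
    using greedy_intervals_eq[OF assms, of _ k] by (intro sum.cong) auto
  finally show ?thesis by (simp add: lc_psum_eq_sum)
qed

lemma greedy_intervals_family:
  assumes A: "S_measurable A"
  shows "lc_ivl_family (greedy_intervals A)" "greedy_intervals A n \<subseteq> A"
proof -
  have mem: "greedy_intervals A n \<in> set (chosen_intervals A k)" if "n < k" for n k
    using greedy_intervals_eq[OF A] length_chosen_intervals[OF A, of k] that
    by (metis nth_mem order.strict_trans2)
  show "greedy_intervals A n \<subseteq> A"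
    using mem[of n "Suc n"] chosen_intervals_good[OF A] unfolding disjoint_intervals_in_def by blast
  have "lc_interval_or_empty (greedy_intervals A n)" for n
    using mem[of n "Suc n"] chosen_intervals_good[OF A] unfolding disjoint_intervals_in_def by blast
  moreover have "greedy_intervals A m \<inter> greedy_intervals A n = {}" if "m < n" for m n
  proof -
    have len: "n < length (chosen_intervals A (Suc n))"
      using length_chosen_intervals[OF A, of "Suc n"] by simp
    moreover have "disjoint_list (chosen_intervals A (Suc n))"
      using chosen_intervals_good[OF A] unfolding disjoint_intervals_in_def by blast
    ultimately have "chosen_intervals A (Suc n) ! m \<inter> chosen_intervals A (Suc n) ! n = {}"
      using disjoint_list_nth that by blast
    then show ?thesis
      using greedy_intervals_eq[OF A len] greedy_intervals_eq[OF A, of m "Suc n"] len that by simp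
  qed
  ultimately show "lc_ivl_family (greedy_intervals A)"
    unfolding lc_ivl_family_def lc_interval_or_empty_def by (metis Int_commute linorder_neqE_nat)
qed

lemma greedy_intervals_psum_le:
  assumes A: "S_measurable A" shows "lc_psum (\<lambda>n. lc_len (greedy_intervals A n)) N \<le> S_measure A"
proof -
  define T where "T n = (if n < N then greedy_intervals A n else {})" for n
  have "lc_ivl_family T" using greedy_intervals_family[OF A] unfolding lc_ivl_family_def T_def
    by auto
  moreover have "(\<Union>n. T n) \<subseteq> A" using greedy_intervals_family(2)[OF A] unfolding T_def by auto
  moreover have "lc_sums (\<lambda>n. lc_len (T n)) (lc_psum (\<lambda>n. lc_len (T n)) N)"
    by (rule lc_sums_finite_support) (simp add: T_def)
  moreover have "lc_psum (\<lambda>n. lc_len (T n)) N = lc_psum (\<lambda>n. lc_len (greedy_intervals A n)) N"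
    unfolding lc_psum_eq_sum T_def by (intro sum.cong) auto
  ultimately have "lc_psum (\<lambda>n. lc_len (greedy_intervals A n)) N \<in> inner_sums A"
    unfolding inner_sums_def by auto
  thus ?thesis using S_measure_sup_inf(1)[OF A] unfolding lc_is_sup_def by blast
qed

lemma greedy_intervals_psum_ge:
  assumes A: "S_measurable A" and e: "0 < \<epsilon>"
  shows "\<exists>N0. \<forall>n\<ge>N0. S_measure A - \<epsilon> < lc_psum (\<lambda>n. lc_len (greedy_intervals A n)) n"
proof -
  obtain k where k: "\<forall>j\<ge>k. lc_monom 1 (of_nat j) < \<epsilon>" using lc_monom_eventually_less[OF e] by blast
  let ?N0 = "length (chosen_intervals A (Suc k))"
  have nn: "\<And>n. 0 \<le> lc_len (greedy_intervals A n)"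
    using lc_len_nonneg[OF lc_ivl_family_member[OF greedy_intervals_family(1)[OF A]]] .
  show ?thesis
  proof (intro exI[of _ ?N0] allI impI)
    fix n assume n: "?N0 \<le> n"
    have "S_measure A - \<epsilon> < S_measure A - lc_monom 1 (of_nat k)" using k
      by (simp add: diff_strict_left_mono)
    also have "\<dots> \<le> sum_lc_len (chosen_intervals A (Suc k))" using chosen_intervals_bound[OF A] .
    also have "\<dots> = lc_psum (\<lambda>n. lc_len (greedy_intervals A n)) ?N0"
      by (rule sum_lc_len_chosen[OF A])
    also have "\<dots> \<le> lc_psum (\<lambda>n. lc_len (greedy_intervals A n)) n" using lc_psum_mono[OF nn n] .
    finally show "S_measure A - \<epsilon> < lc_psum (\<lambda>n. lc_len (greedy_intervals A n)) n" .
  qed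
qed

lemma greedy_intervals_sums:
  assumes A: "S_measurable A" shows "lc_sums (\<lambda>n. lc_len (greedy_intervals A n)) (S_measure A)"
  unfolding lc_sums_def lc_tendsto_def
proof (intro allI impI)
  fix \<epsilon> :: lc assume e: "0 < \<epsilon>"
  obtain N0 where N0: "\<forall>n\<ge>N0. S_measure A - \<epsilon> < lc_psum (\<lambda>n. lc_len (greedy_intervals A n)) n"
    using greedy_intervals_psum_ge[OF A e] by blast
  show "\<exists>N. \<forall>n\<ge>N. lc_abs (lc_psum (\<lambda>n. lc_len (greedy_intervals A n)) n - S_measure A) < \<epsilon>"
  proof (intro exI[of _ N0] allI impI)
    fix n assume n: "N0 \<le> n"
    have a: "lc_psum (\<lambda>n. lc_len (greedy_intervals A n)) n \<le> S_measure A"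
      by (rule greedy_intervals_psum_le[OF A])
    have b: "S_measure A - \<epsilon> < lc_psum (\<lambda>n. lc_len (greedy_intervals A n)) n" using N0 n by blast
    show "lc_abs (lc_psum (\<lambda>n. lc_len (greedy_intervals A n)) n - S_measure A) < \<epsilon>"
      unfolding lc_abs_eq_abs abs_less_iff_linordered
    proof
      have "lc_psum (\<lambda>n. lc_len (greedy_intervals A n)) n - S_measure A \<le> 0" using a by simp
      thus "lc_psum (\<lambda>n. lc_len (greedy_intervals A n)) n - S_measure A < \<epsilon>" using e
        by (rule le_less_trans)
      show "- (lc_psum (\<lambda>n. lc_len (greedy_intervals A n)) n - S_measure A) < \<epsilon>" using b
        by (simp add: algebra_simps)
    qed
  qed
qed

lemma outer_sums_remainder_small:
  assumes A: "S_measurable A" and e: "0 < \<epsilon>"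
  shows "\<exists>y\<in>outer_sums (A - (\<Union>n. greedy_intervals A n)). y \<le> \<epsilon>"
proof -
  let ?m = "S_measure A"
  define h where "h = lc_half \<epsilon>"
  define h2 where "h2 = lc_half h"
  have h0: "0 < h" unfolding h_def using lc_half_pos[OF e] .
  have h20: "0 < h2" unfolding h2_def using lc_half_pos[OF h0] .
  obtain y0 where y0: "y0 \<in> outer_sums A" "y0 \<le> ?m + h2" using S_measure_approx(2)[OF A h20]
    by blast
  obtain J where J: "lc_ivl_family J" "A \<subseteq> (\<Union>n. J n)" "lc_sums (\<lambda>n. lc_len (J n)) y0"
    using y0(1) unfolding outer_sums_def by blast
  obtain N0 where N0: "\<forall>n\<ge>N0. ?m - h2 < lc_psum (\<lambda>n. lc_len (greedy_intervals A n)) n"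
    using greedy_intervals_psum_ge[OF A h20] by blast
  let ?Ks = "map (greedy_intervals A) [0..<N0]"
  have Ks: "\<forall>K\<in>set ?Ks. lc_interval_or_empty K \<and> K \<subseteq> A"
    using lc_ivl_family_member[OF greedy_intervals_family(1)[OF A]]
      greedy_intervals_family(2)[OF A] by auto
  have dKs: "disjoint_list ?Ks"
    using disjoint_list_map[of "[0..<N0]" "greedy_intervals A"] greedy_intervals_family(1)[OF A]
    unfolding lc_ivl_family_def by simp
  obtain J' s' where J': "lc_ivl_family J'" "A - \<Union>(set ?Ks) \<subseteq> (\<Union>n. J' n)"
    "lc_sums (\<lambda>n. lc_len (J' n)) s'"
    "s' \<le> y0 - sum_lc_len ?Ks + h"
    using outer_sums_Diff_list[OF J Ks dKs] h0 by blast
  have "\<Union>(set ?Ks) \<subseteq> (\<Union>n. greedy_intervals A n)"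
  proof (rule Union_least)
    fix X assume "X \<in> set ?Ks"
    then obtain i where "X = greedy_intervals A i" by auto
    thus "X \<subseteq> (\<Union>n. greedy_intervals A n)" by blast
  qed
  hence "A - (\<Union>n. greedy_intervals A n) \<subseteq> A - \<Union>(set ?Ks)" by (rule Diff_mono[OF order.refl])
  hence "A - (\<Union>n. greedy_intervals A n) \<subseteq> (\<Union>n. J' n)" using J'(2) by (rule order.trans)
  hence "s' \<in> outer_sums (A - (\<Union>n. greedy_intervals A n))" unfolding outer_sums_def using J'(1,3)
    by blast
  moreover have "s' \<le> \<epsilon>"
  proof -
    have p: "?m - h2 < sum_lc_len ?Ks" using N0 sum_lc_len_map[of "greedy_intervals A" N0] by simp
    have "s' \<le> y0 - sum_lc_len ?Ks + h" by (rule J'(4))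
    also have "\<dots> \<le> (?m + h2) - (?m - h2) + h"
      using y0(2) less_imp_le[OF p] by (intro add_right_mono diff_mono)
    also have "\<dots> = (h2 + h2) + h" by (simp add: algebra_simps)
    also have "\<dots> = \<epsilon>" unfolding h2_def h_def by simp
    finally show ?thesis .
  qed
  ultimately show ?thesis by blast
qed

theorem theorem2p1:
  assumes "S_measurable A"
  shows "\<exists>K S. (\<forall>n. K n = {} \<or> lc_interval (K n)) \<and>
              (\<forall>m n. m \<noteq> n \<longrightarrow> K m \<inter> K n = {}) \<and>
              A = (\<Union>n. K n) \<union> S \<and> (\<Union>n. K n) \<inter> S = {} \<and>
              lc_sums (\<lambda>n. lc_len (K n)) (S_measure A) \<and>
              S_measurable S \<and> S_measure S = 0"
proof -
  let ?K = "greedy_intervals A"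
  let ?S = "A - (\<Union>n. ?K n)"
  have "\<forall>n. ?K n = {} \<or> lc_interval (?K n)" "\<forall>m n. m \<noteq> n \<longrightarrow> ?K m \<inter> ?K n = {}"
    using greedy_intervals_family(1)[OF assms] unfolding lc_ivl_family_def by blast+
  moreover have "A = (\<Union>n. ?K n) \<union> ?S"
    using greedy_intervals_family(2)[OF assms] by blast
  moreover have "S_measurable ?S" "S_measure ?S = 0"
    using S_measure_zeroI outer_sums_remainder_small[OF assms] by blast+
  ultimately show ?thesis
    using greedy_intervals_sums[OF assms] by blast
qed

end
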